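(* Let $n,m,n_g,n_w,r$, $A\in\mathbb{R}^{n\times n}$, $S\in\mathbb{R}^{n\times n_g}$, $C\in\mathbb{R}^{m\times n}$, $D_\omega\in\mathbb{R}^{n\times n_w}$ be given, $n_z=n+rn_g$, $d_n=(r-1)n_g$, and define $$A_a=\begin{bmatrix} A & S & 0\\ 0 & 0 & I_{d_n}\\ 0&0&0\end{bmatrix},\quad D_a=\begin{bmatrix} D_\omega & 0\\ 0&0\\ 0 & I_{n_g}\end{bmatrix},\quad C_a=\begin{bmatrix} C & 0\end{bmatrix},\quad \bar C_a=\begin{bmatrix} I_n & 0 & 0\\ 0 & I_{n_g} & 0\end{bmatrix}.$$ Suppose there exist $P\in\mathbb{R}^{n_z\times n_z}$, $P\succ 0$, $R,Q\in\mathbb{R}^{n_z\times m}$, a symmetric matrix $Z$, and a scalar $\bar\gamma>0$ such that $$\begin{bmatrix} X & Q & -R\\ * & -\bar\gamma I & 0\\ * & * & -\bar\gamma I\end{bmatrix}\prec 0,\qquad \begin{bmatrix} P & \bar C_a^\top\\ * & Z\end{bmatrix}\succ 0,\qquad \operatorname{trace}(Z)<\bar\gamma,$$ where $X:=A_a^\top P+A_a^\top C_a^\top R^\top-C_a^\top Q^\top+PA_a+RC_aA_a-QC_a$. Let $E=P^{-1}R$, $K=P^{-1}Q$, $M=I+EC_a$, $N=MA_a-KC_a$, $\bar B=[K\ \ -E]$, and $T_{e_d\nu_a}(s)=\bar C_a(sI-N)^{-1}\bar B$ (the transfer matrix from $\nu_a$ to $e_d=\bar C_ae$ of the error dynamics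 $\dot e=Ne-MD_a\omega_a+\bar B\nu_a$). Then $\|T_{e_d\nu_a}\|_{H_2}<\bar\gamma$.
   Context: $*$ denotes the block that makes the matrix symmetric. The $H_2$-norm is $\|T\|_{H_2}=\sqrt{\frac{1}{2\pi}\operatorname{trace}\int_{-\infty}^{\infty}T(i\mu)T^H(i\mu)\,d\mu}$, with $T^H$ the Hermitian transpose. *)

theory Defs
  imports "HOL-Analysis.Analysis" "Jordan_Normal_Form.Schur_Decomposition"
          "Jordan_Normal_Form.Gauss_Jordan_Elimination"
begin

definition hcat :: "'a::zero mat \<Rightarrow> 'a mat \<Rightarrow> 'a mat" where
  "hcat X Y = four_block_mat X Y (0\<^sub>m 0 (dim_col X)) (0\<^sub>m 0 (dim_col Y))"

definition vcat :: "'a::zero mat \<Rightarrow> 'a mat \<Rightarrow> 'a mat" where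
  "vcat X Y = append_rows X Y"

definition mtrace :: "'a::comm_monoid_add mat \<Rightarrow> 'a" where
  "mtrace M = (\<Sum>i<dim_row M. M $$ (i,i))"

(* matrix inverse (meaningful for invertible square matrices) *)
definition minv :: "'a::field mat \<Rightarrow> 'a mat" where
  "minv M = the (mat_inverse M)"

definition symmetric_mat :: "real mat \<Rightarrow> nat \<Rightarrow> bool" where
  "symmetric_mat M k \<longleftrightarrow> M \<in> carrier_mat k k \<and> transpose_mat M = M"

definition pos_def :: "real mat \<Rightarrow> nat \<Rightarrow> bool" where
  "pos_def M k \<longleftrightarrow> symmetric_mat M k \<and>
     (\<forall>x \<in> carrier_vec k. x \<noteq> 0\<^sub>v k \<longrightarrow> scalar_prod x (M *\<^sub>v x) > 0)"

definition neg_def :: "real mat \<Rightarrow> nat \<Rightarrow> bool" where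
  "neg_def M k \<longleftrightarrow> pos_def (- M) k"

definition cmat :: "real mat \<Rightarrow> complex mat" where
  "cmat M = map_mat complex_of_real M"

definition transfer :: "real mat \<Rightarrow> real mat \<Rightarrow> real mat \<Rightarrow> complex \<Rightarrow> complex mat" where
  "transfer Cb N Bb s =
     cmat Cb * minv (s \<cdot>\<^sub>m 1\<^sub>m (dim_row N) - cmat N) * cmat Bb"

definition H2_integrand :: "(complex \<Rightarrow> complex mat) \<Rightarrow> real \<Rightarrow> complex mat" where
  "H2_integrand T \<mu> = T (\<i> * complex_of_real \<mu>) * mat_adjoint (T (\<i> * complex_of_real \<mu>))"

(* the H2 norm is finite: every entry of T(i\<mu>)T(i\<mu>)^H is integrable over the real line
   (p = number of outputs of T) *)
definition H2_finite :: "nat \<Rightarrow> (complex \<Rightarrow> complex mat) \<Rightarrow> bool" where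
  "H2_finite p T \<longleftrightarrow>
     (\<forall>i<p. \<forall>j<p. (\<lambda>\<mu>. H2_integrand T \<mu> $$ (i,j)) integrable_on (UNIV :: real set))"

definition H2_norm :: "nat \<Rightarrow> (complex \<Rightarrow> complex mat) \<Rightarrow> real" where
  "H2_norm p T = sqrt ((1 / (2 * pi)) *
     Re (mtrace (mat p p (\<lambda>(i,j). integral (UNIV :: real set) (\<lambda>\<mu>. H2_integrand T \<mu> $$ (i,j))))))"

end

theory Submission
  imports Defs "HOL-Complex_Analysis.Complex_Analysis"
begin

(* Let V = P^-1, so that E = V R and K = V Q. Then the matrix X of the first LMI is N^T P + P N, and a
   Schur complement turns the LMI into the Lyapunov inequality
     Bbar Bbar^T <= - gamma (N V + V N^T),        Bbar = [K  -E],
   whose strict part also makes N Hurwitz. With G(s) = (s I - N)^-1 it gives, on the imaginary axis,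
     T T^H <= gamma Cbar (G V + V G^H) Cbar^T.
   As G(s) = 1/s + O(|s|^-2), Cauchy's theorem on half discs shows that Re (Cbar G V Cbar^T) integrates over
   the axis to pi Cbar V Cbar^T, hence ||T||_H2^2 <= gamma trace (Cbar V Cbar^T). Finally the second LMI is a
   Schur complement for Cbar V Cbar^T <= Z, so ||T||_H2^2 <= gamma trace Z < gamma^2. *)

section \<open>Block matrices and quadratic forms\<close>

lemma hcat_carrier [simp, intro]:
  "X \<in> carrier_mat nr nc1 \<Longrightarrow> Y \<in> carrier_mat nr nc2 \<Longrightarrow> hcat X Y \<in> carrier_mat nr (nc1 + nc2)"
  unfolding hcat_def by (metis carrier_matD(2) four_block_carrier_mat zero_carrier_mat add_0_right)

lemma vcat_carrier [simp, intro]: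
  "X \<in> carrier_mat nr1 nc \<Longrightarrow> Y \<in> carrier_mat nr2 nc \<Longrightarrow> vcat X Y \<in> carrier_mat (nr1 + nr2) nc"
  unfolding vcat_def by auto

lemma hcat_mult_vec:
  fixes X Y :: "'a::comm_ring_1 mat"
  assumes "X \<in> carrier_mat nr nc1" "Y \<in> carrier_mat nr nc2"
    and "a \<in> carrier_vec nc1" "b \<in> carrier_vec nc2"
  shows "hcat X Y *\<^sub>v (a @\<^sub>v b) = X *\<^sub>v a + Y *\<^sub>v b"
proof -
  have "hcat X Y *\<^sub>v (a @\<^sub>v b) = (X *\<^sub>v a + Y *\<^sub>v b) @\<^sub>v (0\<^sub>m 0 nc1 *\<^sub>v a + 0\<^sub>m 0 nc2 *\<^sub>v b)"
    unfolding hcat_def using assms by (auto intro!: four_block_mat_mult_vec)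
  also have "\<dots> = X *\<^sub>v a + Y *\<^sub>v b"
    by (intro eq_vecI) (use assms in auto)
  finally show ?thesis .
qed

lemma scalar_prod_vcat_mult_vec:
  fixes X Y :: "'a::comm_ring_1 mat"
  assumes "X \<in> carrier_mat nr nc" "Y \<in> carrier_mat nr' nc"
    and "x \<in> carrier_vec nr" "y \<in> carrier_vec nr'" "v \<in> carrier_vec nc"
  shows "(x @\<^sub>v y) \<bullet> (vcat X Y *\<^sub>v v) = x \<bullet> (X *\<^sub>v v) + y \<bullet> (Y *\<^sub>v v)"
  unfolding vcat_def using assms by (simp add: mat_mult_append scalar_prod_append)

lemma transpose_hcat:
  assumes "X \<in> carrier_mat nr nc1" "Y \<in> carrier_mat nr nc2"
  shows "transpose_mat (hcat X Y) = vcat (transpose_mat X) (transpose_mat Y)"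
  unfolding hcat_def vcat_def append_rows_def using assms by (intro eq_matI) auto

lemma scalar_prod_transpose:
  fixes A :: "'a::comm_ring_1 mat"
  assumes "A \<in> carrier_mat nr nc" "x \<in> carrier_vec nc" "y \<in> carrier_vec nr"
  shows "y \<bullet> (A *\<^sub>v x) = (transpose_mat A *\<^sub>v y) \<bullet> x"
  using transpose_vec_mult_scalar[OF assms] by simp

lemma scalar_prod_symmetric_mat:
  fixes A :: "'a::comm_ring_1 mat"
  assumes "A \<in> carrier_mat n n" "transpose_mat A = A" "x \<in> carrier_vec n" "y \<in> carrier_vec n"
  shows "x \<bullet> (A *\<^sub>v y) = y \<bullet> (A *\<^sub>v x)"
  using assms scalar_prod_transpose[of A n n y x] comm_scalar_prod[of "A *\<^sub>v x" n y] by simp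

lemma smult_one_mat_mult_vec:
  fixes v :: "'a::comm_ring_1 vec"
  assumes "v \<in> carrier_vec n"
  shows "(k \<cdot>\<^sub>m 1\<^sub>m n) *\<^sub>v v = k \<cdot>\<^sub>v v"
proof (intro eq_vecI)
  fix i assume "i < dim_vec (k \<cdot>\<^sub>v v)"
  with assms show "((k \<cdot>\<^sub>m 1\<^sub>m n) *\<^sub>v v) $ i = (k \<cdot>\<^sub>v v) $ i"
    by (auto simp: scalar_prod_def if_distrib[of "\<lambda>x. k * x * _"] sum.delta cong: if_cong)
qed (use assms in auto)

lemma transpose_mult_vec_self_scalar_prod:
  fixes B :: "'a::comm_ring_1 mat"
  assumes "B \<in> carrier_mat n q" "x \<in> carrier_vec n"
  shows "(transpose_mat B *\<^sub>v x) \<bullet> (transpose_mat B *\<^sub>v x) = (\<Sum>k<q. (x \<bullet> col B k)\<^sup>2)"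
  using assms comm_scalar_prod[of x n "col B _"]
  by (auto simp: scalar_prod_def[of "transpose_mat B *\<^sub>v x"] lessThan_atLeast0 power2_eq_square
      intro!: sum.cong)

lemma Lyapunov_quadratic_form:
  fixes N P :: "real mat"
  assumes N: "N \<in> carrier_mat n n" and P: "P \<in> carrier_mat n n" "transpose_mat P = P"
    and x: "x \<in> carrier_vec n"
  shows "x \<bullet> ((transpose_mat N * P + P * N) *\<^sub>v x) = 2 * ((P *\<^sub>v x) \<bullet> (N *\<^sub>v x))"
proof -
  have "x \<bullet> ((transpose_mat N * P + P * N) *\<^sub>v x)
      = x \<bullet> (transpose_mat N *\<^sub>v (P *\<^sub>v x)) + x \<bullet> (P *\<^sub>v (N *\<^sub>v x))"
    using N P x by (simp add: add_mult_distrib_mat_vec[of _ n n] scalar_prod_add_distrib[of _ n])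
  also have "x \<bullet> (transpose_mat N *\<^sub>v (P *\<^sub>v x)) = (N *\<^sub>v x) \<bullet> (P *\<^sub>v x)"
    using scalar_prod_transpose[of "transpose_mat N" n n "P *\<^sub>v x" x] N P x by simp
  also have "x \<bullet> (P *\<^sub>v (N *\<^sub>v x)) = (P *\<^sub>v x) \<bullet> (N *\<^sub>v x)"
    using scalar_prod_transpose[of P n n "N *\<^sub>v x" x] N P x by simp
  finally show ?thesis
    using comm_scalar_prod[of "N *\<^sub>v x" n "P *\<^sub>v x"] N P x by simp
qed

lemma pos_def_carrier: "pos_def L k \<Longrightarrow> L \<in> carrier_mat k k"
  unfolding pos_def_def symmetric_mat_def by simp

lemma pos_def_nonneg:
  assumes "pos_def L k" "v \<in> carrier_vec k"
  shows "0 \<le> v \<bullet> (L *\<^sub>v v)"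
  using assms pos_def_carrier[OF assms(1)] unfolding pos_def_def
  by (cases "v = 0\<^sub>v k") (auto intro: less_imp_le)

lemma pos_def_pos:
  "pos_def L k \<Longrightarrow> v \<in> carrier_vec k \<Longrightarrow> v \<noteq> 0\<^sub>v k \<Longrightarrow> 0 < v \<bullet> (L *\<^sub>v v)"
  unfolding pos_def_def by blast

lemma neg_def_quadratic_form:
  assumes "neg_def L k" "v \<in> carrier_vec k"
  shows "v \<bullet> (L *\<^sub>v v) = - (v \<bullet> ((- L) *\<^sub>v v))"
  using assms pos_def_carrier[of "- L" k] unfolding neg_def_def by auto

lemma neg_def_nonpos: "neg_def L k \<Longrightarrow> v \<in> carrier_vec k \<Longrightarrow> v \<bullet> (L *\<^sub>v v) \<le> 0"
  using neg_def_quadratic_form pos_def_nonneg unfolding neg_def_def by fastforce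

lemma neg_def_neg:
  "neg_def L k \<Longrightarrow> v \<in> carrier_vec k \<Longrightarrow> v \<noteq> 0\<^sub>v k \<Longrightarrow> v \<bullet> (L *\<^sub>v v) < 0"
  using neg_def_quadratic_form pos_def_pos unfolding neg_def_def by fastforce

lemma minv_inverse:
  fixes M :: "'a::field mat"
  assumes M: "M \<in> carrier_mat n n" and "det M \<noteq> 0"
  shows "minv M \<in> carrier_mat n n" "M * minv M = 1\<^sub>m n" "minv M * M = 1\<^sub>m n"
proof -
  have "M \<in> Units (ring_mat TYPE('a) n ())"
    by (rule det_non_zero_imp_unit[OF M \<open>det M \<noteq> 0\<close>])
  then obtain B where B: "mat_inverse M = Some B"
    using mat_inverse(1)[OF M, of "()"] by (cases "mat_inverse M") auto
  then show "minv M \<in> carrier_mat n n" "M * minv M = 1\<^sub>m n" "minv M * M = 1\<^sub>m n"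
    using mat_inverse(2)[OF M B] unfolding minv_def by auto
qed

lemma pos_def_inverse:
  assumes "pos_def P n"
  shows "minv P \<in> carrier_mat n n" and "P * minv P = 1\<^sub>m n" and "minv P * P = 1\<^sub>m n"
    and "transpose_mat (minv P) = minv P"
proof -
  have P: "P \<in> carrier_mat n n" and Ps: "transpose_mat P = P"
    using assms unfolding pos_def_def symmetric_mat_def by auto
  have "det P \<noteq> 0"
  proof
    assume "det P = 0"
    then obtain v where "v \<in> carrier_vec n" "v \<noteq> 0\<^sub>v n" "P *\<^sub>v v = 0\<^sub>v n"
      using det_0_iff_vec_prod_zero_field[OF P] by auto
    then show False using pos_def_pos[OF assms, of v] by simp
  qed
  from minv_inverse[OF P this]
  show V: "minv P \<in> carrier_mat n n" and PV: "P * minv P = 1\<^sub>m n" and "minv P * P = 1\<^sub>m n"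
    by auto
  have "transpose_mat (minv P) = transpose_mat (minv P) * (P * minv P)"
    using V PV by simp
  also have "\<dots> = transpose_mat (P * minv P) * minv P"
    using P V Ps by (simp add: transpose_mult[OF P V] assoc_mult_mat[of _ n n _ n _ n])
  finally show "transpose_mat (minv P) = minv P"
    using PV V by simp
qed

section \<open>The two linear matrix inequalities\<close>

lemma observer_LMI_quadratic_form:
  fixes X Q R :: "real mat"
  assumes X: "X \<in> carrier_mat nz nz" and Q: "Q \<in> carrier_mat nz m" and R: "R \<in> carrier_mat nz m"
    and a: "a \<in> carrier_vec nz" and y: "y \<in> carrier_vec m" and w: "w \<in> carrier_vec m"
  shows "(a @\<^sub>v (y @\<^sub>v w)) \<bullet> (vcat (hcat X (hcat Q (- R)))
                   (vcat (hcat (transpose_mat Q) (hcat (- \<gamma> \<cdot>\<^sub>m 1\<^sub>m m) (0\<^sub>m m m)))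
                         (hcat (transpose_mat (- R)) (hcat (0\<^sub>m m m) (- \<gamma> \<cdot>\<^sub>m 1\<^sub>m m)))) *\<^sub>v (a @\<^sub>v (y @\<^sub>v w))) =
     a \<bullet> (X *\<^sub>v a) + 2 * ((transpose_mat Q *\<^sub>v a) \<bullet> y) - 2 * ((transpose_mat R *\<^sub>v a) \<bullet> w)
     - \<gamma> * (y \<bullet> y) - \<gamma> * (w \<bullet> w)"
proof -
  have QT: "transpose_mat Q \<in> carrier_mat m nz" and RT: "- transpose_mat R \<in> carrier_mat m nz"
    and G: "- \<gamma> \<cdot>\<^sub>m 1\<^sub>m m \<in> carrier_mat m m" and O: "0\<^sub>m m m \<in> carrier_mat m m"
    and yw: "y @\<^sub>v w \<in> carrier_vec (m + m)" and v: "a @\<^sub>v (y @\<^sub>v w) \<in> carrier_vec (nz + (m + m))"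
    using Q R a y w by auto
  have "0\<^sub>m m m *\<^sub>v u = 0\<^sub>v m" if "u \<in> carrier_vec m" for u :: "real vec"
    using that by (intro eq_vecI) auto
  moreover have "a \<bullet> (Q *\<^sub>v y) = (transpose_mat Q *\<^sub>v a) \<bullet> y" "y \<bullet> (transpose_mat Q *\<^sub>v a) = (transpose_mat Q *\<^sub>v a) \<bullet> y"
    "a \<bullet> (R *\<^sub>v w) = (transpose_mat R *\<^sub>v a) \<bullet> w" "w \<bullet> (transpose_mat R *\<^sub>v a) = (transpose_mat R *\<^sub>v a) \<bullet> w"
    using scalar_prod_transpose[OF Q y a] scalar_prod_transpose[OF R w a] Q R a
      comm_scalar_prod[OF y, of "transpose_mat Q *\<^sub>v a"] comm_scalar_prod[OF w, of "transpose_mat R *\<^sub>v a"]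
    by auto
  ultimately show ?thesis
    using X Q R a y w
    by (simp add: transpose_uminus scalar_prod_vcat_mult_vec[OF _ _ a yw v] scalar_prod_vcat_mult_vec[OF _ _ y w v]
        hcat_mult_vec[OF X _ a yw] hcat_mult_vec[OF QT _ a yw] hcat_mult_vec[OF RT _ a yw]
        hcat_mult_vec[OF Q _ y w] hcat_mult_vec[OF G O y w] hcat_mult_vec[OF O G y w]
        smult_one_mat_mult_vec scalar_prod_add_distrib[of _ nz] scalar_prod_add_distrib[of _ m])
qed

lemma observer_LMI_bound:
  fixes X Q R :: "real mat"
  assumes X: "X \<in> carrier_mat nz nz" and Q: "Q \<in> carrier_mat nz m" and R: "R \<in> carrier_mat nz m"
    and \<gamma>: "\<gamma> > 0" and a: "a \<in> carrier_vec nz"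
    and LMI: "neg_def (vcat (hcat X (hcat Q (- R)))
                   (vcat (hcat (transpose_mat Q) (hcat (- \<gamma> \<cdot>\<^sub>m 1\<^sub>m m) (0\<^sub>m m m)))
                         (hcat (transpose_mat (- R)) (hcat (0\<^sub>m m m) (- \<gamma> \<cdot>\<^sub>m 1\<^sub>m m)))))
                   (nz + 2 * m)"
  shows "a \<bullet> (X *\<^sub>v a) + ((transpose_mat Q *\<^sub>v a) \<bullet> (transpose_mat Q *\<^sub>v a)
           + (transpose_mat R *\<^sub>v a) \<bullet> (transpose_mat R *\<^sub>v a)) / \<gamma> \<le> 0"
    and "a \<noteq> 0\<^sub>v nz \<Longrightarrow> a \<bullet> (X *\<^sub>v a) < 0"
proof -
  define qa ra where "qa = transpose_mat Q *\<^sub>v a" and "ra = transpose_mat R *\<^sub>v a"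
  have qa: "qa \<in> carrier_vec m" and ra: "ra \<in> carrier_vec m"
    unfolding qa_def ra_def using Q R a by auto
  have dim: "nz + 2 * m = nz + (m + m)" by simp
  \<comment> \<open>completing the square in the last two block components\<close>
  define y w where "y = (1 / \<gamma>) \<cdot>\<^sub>v qa" and "w = (- 1 / \<gamma>) \<cdot>\<^sub>v ra"
  have "a \<bullet> (X *\<^sub>v a) + 2 * (qa \<bullet> y) - 2 * (ra \<bullet> w) - \<gamma> * (y \<bullet> y) - \<gamma> * (w \<bullet> w) \<le> 0"
    using neg_def_nonpos[OF LMI[unfolded dim], of "a @\<^sub>v (y @\<^sub>v w)"] a qa ra
    by (simp add: observer_LMI_quadratic_form[OF X Q R a] qa_def ra_def y_def w_def)
  moreover have "2 * (qa \<bullet> y) - 2 * (ra \<bullet> w) - \<gamma> * (y \<bullet> y) - \<gamma> * (w \<bullet> w) = (qa \<bullet> qa + ra \<bullet> ra) / \<gamma>"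
    unfolding y_def w_def using qa ra \<gamma> by (simp add: field_simps power2_eq_square)
  ultimately show "a \<bullet> (X *\<^sub>v a) + (qa \<bullet> qa + ra \<bullet> ra) / \<gamma> \<le> 0"
    by linarith
  show "a \<bullet> (X *\<^sub>v a) < 0" if "a \<noteq> 0\<^sub>v nz"
  proof -
    have "a @\<^sub>v (0\<^sub>v m @\<^sub>v 0\<^sub>v m) \<noteq> 0\<^sub>v nz @\<^sub>v (0\<^sub>v m @\<^sub>v 0\<^sub>v m)"
      using that append_vec_eq[OF a zero_carrier_vec] by blast
    moreover have "0\<^sub>v nz @\<^sub>v (0\<^sub>v m @\<^sub>v 0\<^sub>v m) = 0\<^sub>v (nz + (m + m))"
      by (intro eq_vecI) auto
    ultimately have "a @\<^sub>v (0\<^sub>v m @\<^sub>v 0\<^sub>v m) \<noteq> 0\<^sub>v (nz + (m + m))"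
      by metis
    from neg_def_neg[OF LMI[unfolded dim] _ this] show ?thesis
      using a Q R by (simp add: observer_LMI_quadratic_form[OF X Q R a])
  qed
qed
lemma pos_def_block_inverse_bound:
  fixes P B Z V :: "real mat"
  assumes P: "P \<in> carrier_mat n n" and B: "B \<in> carrier_mat p n" and Z: "Z \<in> carrier_mat p p"
    and V: "V \<in> carrier_mat n n" and PV: "P * V = 1\<^sub>m n"
    and pd: "pos_def (vcat (hcat P (transpose_mat B)) (hcat B Z)) (n + p)"
    and y: "y \<in> carrier_vec p"
  shows "(transpose_mat B *\<^sub>v y) \<bullet> (V *\<^sub>v (transpose_mat B *\<^sub>v y)) \<le> y \<bullet> (Z *\<^sub>v y)"
proof -
  define z where "z = transpose_mat B *\<^sub>v y"
  define x where "x = - (V *\<^sub>v z)"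
  have z: "z \<in> carrier_vec n" and x: "x \<in> carrier_vec n"
    unfolding x_def z_def using B V y by auto
  have "P *\<^sub>v x = - (P *\<^sub>v (V *\<^sub>v z))"
    unfolding x_def using P V z by (intro eq_vecI) auto
  also have "P *\<^sub>v (V *\<^sub>v z) = z"
    using P V z PV by (simp add: assoc_mult_mat_vec[symmetric, of P n n V n z])
  finally have Px: "P *\<^sub>v x = - z" .
  \<comment> \<open>the minimiser of the block quadratic form over the first component\<close>
  have "0 \<le> (x @\<^sub>v y) \<bullet> (vcat (hcat P (transpose_mat B)) (hcat B Z) *\<^sub>v (x @\<^sub>v y))"
    using pos_def_nonneg[OF pd] x y by auto
  also have "\<dots> = x \<bullet> (P *\<^sub>v x) + x \<bullet> z + (y \<bullet> (B *\<^sub>v x) + y \<bullet> (Z *\<^sub>v y))"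
    using P B Z x y
    by (simp add: scalar_prod_vcat_mult_vec[where nr = n and nr' = p and nc = "n + p"] hcat_mult_vec[OF P _ x y]
        hcat_mult_vec[OF B Z x y] scalar_prod_add_distrib[of _ n] scalar_prod_add_distrib[of _ p]
        z_def scalar_prod_transpose[of B p n y x])
  also have "y \<bullet> (B *\<^sub>v x) = x \<bullet> z"
    unfolding z_def using scalar_prod_transpose[OF B x y] comm_scalar_prod[OF x, of "transpose_mat B *\<^sub>v y"] B y
    by simp
  also have "x \<bullet> (P *\<^sub>v x) = - (x \<bullet> z)"
    unfolding Px using x z by simp
  also have "x \<bullet> z = - (z \<bullet> (V *\<^sub>v z))"
    unfolding x_def using V z by (simp add: comm_scalar_prod[of "V *\<^sub>v z" n z])
  finally show ?thesis unfolding z_def by simp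
qed

lemma pos_def_block_trace_bound:
  fixes P B Z V :: "real mat"
  assumes P: "P \<in> carrier_mat n n" and B: "B \<in> carrier_mat p n" and Z: "Z \<in> carrier_mat p p"
    and V: "V \<in> carrier_mat n n" and PV: "P * V = 1\<^sub>m n"
    and pd: "pos_def (vcat (hcat P (transpose_mat B)) (hcat B Z)) (n + p)"
  shows "(\<Sum>i<p. row B i \<bullet> (V *\<^sub>v row B i)) \<le> mtrace Z"
proof -
  have "row B i \<bullet> (V *\<^sub>v row B i) \<le> Z $$ (i, i)" if i: "i < p" for i
  proof -
    have "transpose_mat B *\<^sub>v unit_vec p i = row B i"
      using B i by (intro eq_vecI) (auto simp: comm_scalar_prod[of _ p "unit_vec p i"])
    moreover have "unit_vec p i \<bullet> (Z *\<^sub>v unit_vec p i) = Z $$ (i, i)"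
      using Z i by (simp add: comm_scalar_prod[of _ p "unit_vec p i"])
    ultimately show ?thesis
      using pos_def_block_inverse_bound[OF P B Z V PV pd unit_vec_carrier[of p i]] by simp
  qed
  then have "(\<Sum>i<p. row B i \<bullet> (V *\<^sub>v row B i)) \<le> (\<Sum>i<p. Z $$ (i, i))"
    by (intro sum_mono) auto
  also have "\<dots> = mtrace Z"
    using Z by (simp add: mtrace_def)
  finally show ?thesis .
qed

lemma observer_Lyapunov_matrix:
  fixes P E K Aa Ca R Q :: "real mat"
  assumes P: "P \<in> carrier_mat nz nz" "transpose_mat P = P"
    and E: "E \<in> carrier_mat nz m" and K: "K \<in> carrier_mat nz m"
    and Aa: "Aa \<in> carrier_mat nz nz" and Ca: "Ca \<in> carrier_mat m nz"
    and PE: "P * E = R" and PK: "P * K = Q"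
  defines "N \<equiv> (1\<^sub>m nz + E * Ca) * Aa - K * Ca"
  shows "transpose_mat N * P + P * N
    = transpose_mat Aa * P + transpose_mat Aa * transpose_mat Ca * transpose_mat R
      - transpose_mat Ca * transpose_mat Q + P * Aa + R * Ca * Aa - Q * Ca"
proof -
  have R: "R \<in> carrier_mat nz m" and Q: "Q \<in> carrier_mat nz m"
    using P E K PE PK by auto
  have N: "N \<in> carrier_mat nz nz"
    unfolding N_def using E K Aa Ca by auto
  have PN: "P * N = P * Aa + R * Ca * Aa - Q * Ca"
    unfolding N_def PE[symmetric] PK[symmetric] using P E K Aa Ca
    by (simp add: add_mult_distrib_mat[of _ nz nz _ _ nz] mult_add_distrib_mat[of _ nz nz _ nz]
        mult_minus_distrib_mat[of _ nz nz _ nz] assoc_mult_mat[of "P * E" nz m Ca nz Aa nz]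
        assoc_mult_mat[of P nz nz E m "Ca * Aa" nz] assoc_mult_mat[of P nz nz K m Ca nz]
        assoc_mult_mat[of P nz nz "E * Ca" nz Aa nz])
  have "transpose_mat N * P = transpose_mat (P * N)"
    using P N by (simp add: transpose_mult[of P nz nz N nz])
  also have "\<dots> = transpose_mat Aa * P + transpose_mat Aa * transpose_mat Ca * transpose_mat R
      - transpose_mat Ca * transpose_mat Q"
    unfolding PN using P R Q Aa Ca
    by (simp add: transpose_minus[of _ nz nz] transpose_add[of _ nz nz] transpose_mult[of _ nz nz _ nz]
        transpose_mult[of _ nz m _ nz] transpose_mult[of R nz m "Ca * Aa" nz] transpose_mult[of Ca m nz Aa nz]
        assoc_mult_mat[of "transpose_mat Aa" nz nz "transpose_mat Ca" m "transpose_mat R" nz])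
  finally show ?thesis
    unfolding PN using P R Q Aa Ca by (auto intro!: eq_matI)
qed

lemma observer_Gramian_inequality:
  fixes P V N Q R :: "real mat"
  assumes P: "P \<in> carrier_mat n n" "transpose_mat P = P" and V: "V \<in> carrier_mat n n" "transpose_mat V = V"
    and PV: "P * V = 1\<^sub>m n" and N: "N \<in> carrier_mat n n"
    and Q: "Q \<in> carrier_mat n m" and R: "R \<in> carrier_mat n m" and \<gamma>: "\<gamma> > 0"
    and LMI: "\<And>a. a \<in> carrier_vec n \<Longrightarrow> a \<bullet> ((transpose_mat N * P + P * N) *\<^sub>v a)
      + ((transpose_mat Q *\<^sub>v a) \<bullet> (transpose_mat Q *\<^sub>v a) + (transpose_mat R *\<^sub>v a) \<bullet> (transpose_mat R *\<^sub>v a)) / \<gamma> \<le> 0"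
    and x: "x \<in> carrier_vec n"
  shows "(transpose_mat (hcat (V * Q) (- (V * R))) *\<^sub>v x) \<bullet> (transpose_mat (hcat (V * Q) (- (V * R))) *\<^sub>v x)
    \<le> - 2 * \<gamma> * ((transpose_mat N *\<^sub>v x) \<bullet> (V *\<^sub>v x))"
proof -
  define y where "y = V *\<^sub>v x"
  have y: "y \<in> carrier_vec n" unfolding y_def using V x by simp
  have QTy: "transpose_mat (V * Q) *\<^sub>v x = transpose_mat Q *\<^sub>v y"
    unfolding y_def using V Q x by (simp add: transpose_mult[of V n n Q m])
  have RTy: "transpose_mat (- (V * R)) *\<^sub>v x = - (transpose_mat R *\<^sub>v y)"
    unfolding y_def using V R x by (simp add: transpose_uminus transpose_mult[of V n n R m])
  have "transpose_mat (hcat (V * Q) (- (V * R))) *\<^sub>v x = (transpose_mat Q *\<^sub>v y) @\<^sub>v (- (transpose_mat R *\<^sub>v y))"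
    using V Q R x by (simp add: transpose_hcat[of _ n m _ m] vcat_def mat_mult_append[of _ m n _ m x] QTy RTy)
  then have "(transpose_mat (hcat (V * Q) (- (V * R))) *\<^sub>v x) \<bullet> (transpose_mat (hcat (V * Q) (- (V * R))) *\<^sub>v x)
      = (transpose_mat Q *\<^sub>v y) \<bullet> (transpose_mat Q *\<^sub>v y) + (transpose_mat R *\<^sub>v y) \<bullet> (transpose_mat R *\<^sub>v y)"
    using Q R y by (simp add: scalar_prod_append[of _ m _ m])
  moreover have "y \<bullet> ((transpose_mat N * P + P * N) *\<^sub>v y) = 2 * ((transpose_mat N *\<^sub>v x) \<bullet> (V *\<^sub>v x))"
  proof -
    have "P *\<^sub>v y = x"
      unfolding y_def using P V x PV by (simp add: assoc_mult_mat_vec[of P n n V n x, symmetric])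
    then show ?thesis
      using Lyapunov_quadratic_form[OF N P y] scalar_prod_transpose[OF N y x] comm_scalar_prod[of x n] N y x
      by (simp add: y_def)
  qed
  ultimately show ?thesis
    using LMI[OF y] \<gamma> by (simp add: field_simps)
qed

section \<open>Resolvents along the imaginary axis\<close>

lemma path_image_right_half_circle:
  assumes "0 \<le> L"
  shows "path_image (part_circlepath 0 L (- pi / 2) (pi / 2)) \<subseteq> {s. 0 \<le> Re s}"
proof
  fix z assume "z \<in> path_image (part_circlepath 0 L (- pi / 2) (pi / 2))"
  then obtain x where x: "x \<in> closed_segment (- pi / 2) (pi / 2)" "z = L * cis x"
    unfolding path_image_part_circlepath' by auto
  then have "0 \<le> cos x"
    by (intro cos_ge_zero) (auto simp: closed_segment_eq_real_ivl)
  then show "z \<in> {s. 0 \<le> Re s}"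
    using x assms by simp
qed

lemma has_contour_integral_inverse_right_half_circle:
  assumes "0 < L"
  shows "((\<lambda>s. k / s) has_contour_integral (k * \<i> * pi)) (part_circlepath 0 L (- pi / 2) (pi / 2))"
proof (subst has_contour_integral_part_circlepath_iff)
  have "((\<lambda>t. k * \<i>) has_integral (pi / 2 - - pi / 2) *\<^sub>R (k * \<i>)) {- pi / 2..pi / 2}"
    using has_integral_const_real[of "k * \<i>" "- pi / 2" "pi / 2"] by simp
  then show "((\<lambda>t. k / (0 + complex_of_real L * cis t) * complex_of_real L * \<i> * cis t) has_integral
      k * \<i> * complex_of_real pi) {- pi / 2..pi / 2}"
    using assms
    by (subst has_integral_cong[where g = "\<lambda>t. k * \<i>"]) (auto simp: scaleR_conv_of_real field_simps)
qed simp

text \<open>The segment from \<open>i L\<close> down to \<open>-i L\<close> and the right half circle bound a half disc, so by Cauchy's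
  theorem the two integrals cancel; the factor \<open>-i\<close> comes from parametrising the axis by \<open>s = i \<mu>\<close>.\<close>

lemma has_integral_imaginary_axis_half_circle:
  fixes g :: "complex \<Rightarrow> complex"
  assumes holo: "g holomorphic_on {s. 0 \<le> Re s}" and L: "0 < L"
  defines "\<Gamma> \<equiv> part_circlepath 0 L (- pi / 2) (pi / 2)"
  shows "((\<lambda>\<mu>. g (Complex 0 \<mu>)) has_integral - \<i> * contour_integral \<Gamma> g) {-L..L}"
proof -
  define S line where "S = {s::complex. 0 \<le> Re s}" and "line = linepath (Complex 0 L) (Complex 0 (-L))"
  have cont: "continuous_on S g"
    using holo holomorphic_on_imp_continuous_on S_def by blast
  have circle_S: "path_image \<Gamma> \<subseteq> S" and line_S: "path_image line \<subseteq> S"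
    unfolding \<Gamma>_def line_def S_def using path_image_right_half_circle L
    by (auto simp: closed_segment_def)
  have "exp (\<i> * complex_of_real (pi / 2)) = \<i>" "exp (\<i> * complex_of_real (- pi / 2)) = - \<i>"
    using cis_conv_exp[of "pi / 2"] cis_conv_exp[of "- pi / 2"] by (simp_all add: complex_eq_iff)
  then have ends: "pathfinish line = pathstart \<Gamma>" "pathfinish \<Gamma> = pathstart line"
    unfolding line_def \<Gamma>_def pathstart_def pathfinish_def part_circlepath_def linepath_def
    by (auto simp: complex_eq_iff)
  have "g contour_integrable_on line"
    using continuous_on_subset[OF cont line_S] unfolding line_def
    by (intro contour_integrable_continuous_linepath) simp
  then obtain J where J: "(g has_contour_integral J) line"
    by (metis has_contour_integral_integral)
  have "g contour_integrable_on \<Gamma>"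
    using continuous_on_subset[OF cont circle_S] unfolding \<Gamma>_def
    by (intro contour_integrable_continuous_part_circlepath) simp
  then have I: "(g has_contour_integral contour_integral \<Gamma> g) \<Gamma>"
    by (rule has_contour_integral_integral)
  have "(g has_contour_integral 0) (line +++ \<Gamma>)"
    using line_S circle_S ends unfolding S_def
    by (intro Cauchy_theorem_convex_simple[OF holo convex_halfspace_Re_ge])
       (auto simp: line_def \<Gamma>_def path_image_join)
  then have "J + contour_integral \<Gamma> g = 0"
    using has_contour_integral_join[OF J I] ends has_contour_integral_unique
    unfolding line_def \<Gamma>_def by (metis valid_path_linepath valid_path_part_circlepath)
  then have J_eq: "J = - contour_integral \<Gamma> g"
    by (simp add: add_eq_0_iff2)
  have "(g has_contour_integral - J) (linepath (Complex 0 (-L)) (Complex 0 L))"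
    using has_contour_integral_reversepath[OF _ J] by (simp add: line_def)
  then have "((\<lambda>\<mu>. g (Complex 0 \<mu>)) has_integral \<i> * J) {-L..L}"
    by (subst (asm) has_contour_integral_linepath_same_Re_iff) (use L in auto)
  then show ?thesis
    using J_eq by simp
qed

lemma imaginary_axis_integral_estimate:
  fixes g :: "complex \<Rightarrow> complex" and k :: complex
  assumes holo: "g holomorphic_on {s. 0 \<le> Re s}"
    and decay: "\<And>s. 0 \<le> Re s \<Longrightarrow> R0 \<le> norm s \<Longrightarrow> norm (g s - k / s) \<le> B / (norm s)\<^sup>2"
    and B: "0 \<le> B" and L: "R0 \<le> L" "0 < L"
  shows "norm (integral {-L..L} (\<lambda>\<mu>. g (Complex 0 \<mu>)) - pi * k) \<le> B * pi / L"
proof -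
  define \<Gamma> where "\<Gamma> = part_circlepath 0 L (- pi / 2) (pi / 2)"
  note line = has_integral_imaginary_axis_half_circle[OF holo L(2), folded \<Gamma>_def]
  have "g contour_integrable_on \<Gamma>"
    unfolding \<Gamma>_def using L path_image_right_half_circle[of L]
    by (intro contour_integrable_continuous_part_circlepath
        continuous_on_subset[OF holomorphic_on_imp_continuous_on[OF holo]]) auto
  then have "((\<lambda>s. g s - k / s) has_contour_integral (contour_integral \<Gamma> g - k * \<i> * pi)) \<Gamma>"
    using has_contour_integral_diff[OF has_contour_integral_integral
        has_contour_integral_inverse_right_half_circle[OF L(2), folded \<Gamma>_def]] by blast
  then have "norm (contour_integral \<Gamma> g - k * \<i> * pi) \<le> (B / L\<^sup>2) * L * (pi / 2 - - pi / 2)"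
    unfolding \<Gamma>_def
  proof (rule has_contour_integral_bound_part_circlepath)
    fix s assume "s \<in> path_image (part_circlepath 0 L (- pi / 2) (pi / 2))"
    then have "0 \<le> Re s" "norm s = L"
      using path_image_right_half_circle[of L] path_image_part_circlepath_subset[of "- pi / 2" "pi / 2" L 0] L
      by (auto simp: sphere_def)
    then show "norm (g s - k / s) \<le> B / L\<^sup>2"
      using decay[of s] L by auto
  qed (use B L in auto)
  also have "\<dots> = B * pi / L"
    using L by (simp add: power2_eq_square field_simps)
  moreover have "integral {-L..L} (\<lambda>\<mu>. g (Complex 0 \<mu>)) - pi * k = - \<i> * (contour_integral \<Gamma> g - k * \<i> * pi)"
    using integral_unique[OF line] by (simp add: algebra_simps)
  ultimately show ?thesis
    by (simp add: norm_mult)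
qed

definition l2_norm :: "complex vec \<Rightarrow> real" where
  "l2_norm v = L2_set (\<lambda>i. cmod (v $ i)) {0..<dim_vec v}"

definition frobenius_norm :: "complex mat \<Rightarrow> real" where
  "frobenius_norm A = L2_set (\<lambda>i. l2_norm (row A i)) {0..<dim_row A}"

lemma l2_norm_nonneg [simp]: "0 \<le> l2_norm v"
  unfolding l2_norm_def by simp

lemma frobenius_norm_nonneg [simp]: "0 \<le> frobenius_norm A"
  unfolding frobenius_norm_def by simp

lemma cmod_scalar_prod_le:
  assumes "dim_vec c = dim_vec u"
  shows "cmod (c \<bullet> u) \<le> l2_norm c * l2_norm u"
proof -
  have "cmod (c \<bullet> u) \<le> (\<Sum>i\<in>{0..<dim_vec u}. cmod (c $ i) * cmod (u $ i))"
    unfolding scalar_prod_def by (rule order_trans[OF norm_sum]) (simp add: norm_mult)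
  also have "\<dots> = (\<Sum>i\<in>{0..<dim_vec u}. \<bar>cmod (c $ i)\<bar> * \<bar>cmod (u $ i)\<bar>)" by simp
  also have "\<dots> \<le> l2_norm c * l2_norm u" unfolding l2_norm_def using assms by (metis L2_set_mult_ineq)
  finally show ?thesis .
qed

lemma l2_norm_mult_mat_vec_le:
  assumes "dim_vec u = dim_col A"
  shows "l2_norm (A *\<^sub>v u) \<le> frobenius_norm A * l2_norm u"
proof -
  have "l2_norm (A *\<^sub>v u) = L2_set (\<lambda>i. cmod (row A i \<bullet> u)) {0..<dim_row A}"
    unfolding l2_norm_def by (intro L2_set_cong) auto
  also have "\<dots> \<le> L2_set (\<lambda>i. l2_norm (row A i) * l2_norm u) {0..<dim_row A}"
    by (intro L2_set_mono cmod_scalar_prod_le) (use assms in auto)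
  also have "\<dots> = frobenius_norm A * l2_norm u" unfolding frobenius_norm_def
    by (subst L2_set_left_distrib) auto
  finally show ?thesis .
qed

lemma l2_norm_smult: "l2_norm (s \<cdot>\<^sub>v u) = cmod s * l2_norm u"
proof -
  have "L2_set (\<lambda>i. cmod ((s \<cdot>\<^sub>v u) $ i)) {0..<dim_vec u} = L2_set (\<lambda>i. cmod s * cmod (u $ i)) {0..<dim_vec u}"
    by (rule L2_set_cong) (auto simp: norm_mult)
  then show ?thesis unfolding l2_norm_def by (subst L2_set_right_distrib) auto
qed

lemma l2_norm_add_le:
  assumes "dim_vec u = dim_vec v"
  shows "l2_norm (u + v) \<le> l2_norm u + l2_norm v"
proof -
  have "l2_norm (u + v) = L2_set (\<lambda>i. cmod (u $ i + v $ i)) {0..<dim_vec v}"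
    unfolding l2_norm_def using assms by (intro L2_set_cong) auto
  also have "\<dots> \<le> L2_set (\<lambda>i. cmod (u $ i) + cmod (v $ i)) {0..<dim_vec v}"
    by (intro L2_set_mono) (auto intro: norm_triangle_ineq)
  also have "\<dots> \<le> l2_norm u + l2_norm v" unfolding l2_norm_def using assms
    by (metis L2_set_triangle_ineq)
  finally show ?thesis .
qed

definition resolvent :: "complex mat \<Rightarrow> complex \<Rightarrow> complex mat" where
  "resolvent A s = minv (s \<cdot>\<^sub>m 1\<^sub>m (dim_row A) - A)"

lemma minv_eq_adj_mat:
  fixes M :: "'a::field mat"
  assumes M: "M \<in> carrier_mat n n" and d: "det M \<noteq> 0"
  shows "minv M = (1 / det M) \<cdot>\<^sub>m adj_mat M"
proof -
  note mp = minv_inverse[OF M d]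
  note ad = adj_mat[OF M]
  have "adj_mat M = (minv M * M) * adj_mat M" using mp ad by simp
  also have "\<dots> = minv M * (M * adj_mat M)" by (rule assoc_mult_mat) (use mp ad M in auto)
  also have "\<dots> = det M \<cdot>\<^sub>m minv M" unfolding adj_mat(2)[OF M] using mp by (subst mult_smult_distrib[of _ n n _ n]) auto
  finally show ?thesis using d mp by (auto intro!: eq_matI)
qed

lemma holomorphic_on_det:
  fixes F :: "complex \<Rightarrow> complex mat"
  assumes "\<And>s. F s \<in> carrier_mat k k"
    and "\<And>i j. i < k \<Longrightarrow> j < k \<Longrightarrow> (\<lambda>s. F s $$ (i,j)) holomorphic_on U"
  shows "(\<lambda>s. det (F s)) holomorphic_on U"
proof -
  have "(\<lambda>s. \<Sum>p \<in> {p. p permutes {0 ..< k}}. signof p * (\<Prod>i = 0 ..< k. F s $$ (i, p i)))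
        holomorphic_on U"
  proof (intro holomorphic_on_sum holomorphic_on_mult holomorphic_on_const holomorphic_on_prod)
    fix p i assume "p \<in> {p. p permutes {0 ..< k}}" "i \<in> {0..<k}"
    then show "(\<lambda>s. F s $$ (i, p i)) holomorphic_on U"
      by (intro assms(2)) (auto simp: permutes_in_image)
  qed
  then show ?thesis using det_def'[OF assms(1)] by (metis (no_types, lifting) holomorphic_transform)
qed

lemma holomorphic_on_char_mat_entry:
  assumes "A \<in> carrier_mat n n" "i < n" "j < n"
  shows "(\<lambda>s. (s \<cdot>\<^sub>m 1\<^sub>m n - A) $$ (i,j)) holomorphic_on U"
proof -
  have "(\<lambda>s. (if i = j then s else 0) - A $$ (i,j)) holomorphic_on U"
    by (cases "i = j") (auto intro!: holomorphic_intros)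
  then show ?thesis by (rule holomorphic_transform) (use assms in auto)
qed

lemma holomorphic_on_adj_char_mat_entry:
  assumes A: "A \<in> carrier_mat n n" and ij: "i < n" "j < n"
  shows "(\<lambda>s. adj_mat (s \<cdot>\<^sub>m 1\<^sub>m n - A) $$ (i,j)) holomorphic_on U"
proof -
  obtain k where n: "n = Suc k" using ij by (cases n) auto
  have "(\<lambda>s. (-1)^(j+i) * det (mat_delete (s \<cdot>\<^sub>m 1\<^sub>m n - A) j i)) holomorphic_on U"
  proof (intro holomorphic_on_mult holomorphic_on_const holomorphic_on_det)
    fix s show "mat_delete (s \<cdot>\<^sub>m 1\<^sub>m n - A) j i \<in> carrier_mat k k"
      using mat_delete_carrier[of "s \<cdot>\<^sub>m 1\<^sub>m n - A" n n j i] A n by auto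
    fix a b assume ab: "a < k" "b < k"
    have "(\<lambda>s. (s \<cdot>\<^sub>m 1\<^sub>m n - A) $$ (insert_index j a, insert_index i b)) holomorphic_on U"
      by (rule holomorphic_on_char_mat_entry[OF A]) (use ab n in \<open>auto simp: insert_index_def\<close>)
    then show "(\<lambda>s. mat_delete (s \<cdot>\<^sub>m 1\<^sub>m n - A) j i $$ (a, b)) holomorphic_on U"
      by (rule holomorphic_transform, subst mat_delete_index[symmetric])
         (use A ab ij n in auto)
  qed
  then show ?thesis
    by (rule holomorphic_transform) (use A ij in \<open>auto simp: adj_mat_def cofactor_def\<close>)
qed

lemma resolvent_inverse:
  assumes A: "A \<in> carrier_mat n n" and d: "det (s \<cdot>\<^sub>m 1\<^sub>m n - A) \<noteq> 0"
  shows "resolvent A s \<in> carrier_mat n n" "(s \<cdot>\<^sub>m 1\<^sub>m n - A) * resolvent A s = 1\<^sub>m n"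
    "resolvent A s * (s \<cdot>\<^sub>m 1\<^sub>m n - A) = 1\<^sub>m n"
proof -
  have M: "s \<cdot>\<^sub>m 1\<^sub>m n - A \<in> carrier_mat n n" using A by auto
  show "resolvent A s \<in> carrier_mat n n" "(s \<cdot>\<^sub>m 1\<^sub>m n - A) * resolvent A s = 1\<^sub>m n"
    "resolvent A s * (s \<cdot>\<^sub>m 1\<^sub>m n - A) = 1\<^sub>m n"
    using minv_inverse[OF M d] A unfolding resolvent_def by auto
qed

definition resolvent_form :: "complex mat \<Rightarrow> complex vec \<Rightarrow> complex vec \<Rightarrow> complex \<Rightarrow> complex" where
  "resolvent_form A c w s = c \<bullet> (resolvent A s *\<^sub>v w)"

lemma holomorphic_on_resolvent_form:
  assumes A: "A \<in> carrier_mat n n" and c: "c \<in> carrier_vec n" and w: "w \<in> carrier_vec n"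
  shows "resolvent_form A c w holomorphic_on {s. det (s \<cdot>\<^sub>m 1\<^sub>m n - A) \<noteq> 0}"
proof -
  let ?U = "{s. det (s \<cdot>\<^sub>m 1\<^sub>m n - A) \<noteq> 0}"
  have "(\<lambda>s. (\<Sum>i\<in>{0..<n}. c $ i * (\<Sum>j\<in>{0..<n}. adj_mat (s \<cdot>\<^sub>m 1\<^sub>m n - A) $$ (i,j) * w $ j))
          / det (s \<cdot>\<^sub>m 1\<^sub>m n - A)) holomorphic_on ?U"
  proof -
    have h1: "\<And>i j. i < n \<Longrightarrow> j < n \<Longrightarrow> (\<lambda>s. adj_mat (s \<cdot>\<^sub>m 1\<^sub>m n - A) $$ (i,j)) holomorphic_on ?U"
      by (rule holomorphic_on_adj_char_mat_entry[OF A])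
    have h2: "(\<lambda>s. det (s \<cdot>\<^sub>m 1\<^sub>m n - A)) holomorphic_on ?U"
      by (rule holomorphic_on_det[where k = n]) (use A holomorphic_on_char_mat_entry[OF A] in auto)
    show ?thesis
      by (intro holomorphic_on_divide holomorphic_on_sum holomorphic_on_mult holomorphic_on_const h1 h2) auto
  qed
  then show ?thesis
  proof (rule holomorphic_transform)
    fix s assume s: "s \<in> ?U"
    have M: "s \<cdot>\<^sub>m 1\<^sub>m n - A \<in> carrier_mat n n" using A by auto
    have r: "resolvent A s = (1 / det (s \<cdot>\<^sub>m 1\<^sub>m n - A)) \<cdot>\<^sub>m adj_mat (s \<cdot>\<^sub>m 1\<^sub>m n - A)"
      unfolding resolvent_def using minv_eq_adj_mat[OF M] s A by auto
    have aM: "adj_mat (s \<cdot>\<^sub>m 1\<^sub>m n - A) \<in> carrier_mat n n" using adj_mat[OF M] by auto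
    show "(\<Sum>i = 0..<n. c $ i * (\<Sum>j = 0..<n. adj_mat (s \<cdot>\<^sub>m 1\<^sub>m n - A) $$ (i, j) * w $ j)) /
          det (s \<cdot>\<^sub>m 1\<^sub>m n - A) = resolvent_form A c w s"
      unfolding resolvent_form_def r using c w aM
      by (simp add: scalar_prod_def sum_divide_distrib sum_distrib_left mult_ac)
  qed
qed

lemma char_mat_mult_vec:
  fixes A :: "complex mat"
  assumes A: "A \<in> carrier_mat n n" and u: "u \<in> carrier_vec n"
  shows "(s \<cdot>\<^sub>m 1\<^sub>m n - A) *\<^sub>v u = s \<cdot>\<^sub>v u - A *\<^sub>v u"
proof (rule eq_vecI)
  fix i assume "i < dim_vec (s \<cdot>\<^sub>v u - A *\<^sub>v u)"
  then have i: "i < n" using A by auto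
  have "((s \<cdot>\<^sub>m 1\<^sub>m n - A) *\<^sub>v u) $ i = (\<Sum>j\<in>{0..<n}. (s * (if i = j then 1 else 0) - A $$ (i,j)) * u $ j)"
    using A u i by (auto simp: scalar_prod_def intro!: sum.cong)
  also have "\<dots> = (\<Sum>j\<in>{0..<n}. (if i = j then s * u $ j else 0) - A $$ (i,j) * u $ j)"
    by (intro sum.cong) (auto simp: left_diff_distrib)
  also have "\<dots> = (\<Sum>j\<in>{0..<n}. (if i = j then s * u $ j else 0)) - (\<Sum>j\<in>{0..<n}. A $$ (i,j) * u $ j)"
    by (simp add: sum_subtractf)
  also have "\<dots> = s * u $ i - (\<Sum>j\<in>{0..<n}. A $$ (i,j) * u $ j)" using i by simp
  also have "\<dots> = (s \<cdot>\<^sub>v u - A *\<^sub>v u) $ i" using A u i by (auto simp: scalar_prod_def)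
  finally show "((s \<cdot>\<^sub>m 1\<^sub>m n - A) *\<^sub>v u) $ i = (s \<cdot>\<^sub>v u - A *\<^sub>v u) $ i" .
qed (use A u in auto)

lemma resolvent_mult_vec_bound:
  assumes A: "A \<in> carrier_mat n n" and w: "w \<in> carrier_vec n" and s: "cmod s \<ge> 2 * frobenius_norm A" "s \<noteq> 0"
    and d: "det (s \<cdot>\<^sub>m 1\<^sub>m n - A) \<noteq> 0"
  shows "l2_norm (resolvent A s *\<^sub>v w) \<le> 2 * l2_norm w / cmod s"
    and "s \<cdot>\<^sub>v (resolvent A s *\<^sub>v w) = w + A *\<^sub>v (resolvent A s *\<^sub>v w)"
proof -
  note rp = resolvent_inverse[OF A d]
  define u where "u = resolvent A s *\<^sub>v w"
  have u: "u \<in> carrier_vec n" unfolding u_def using rp w by auto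
  have "(s \<cdot>\<^sub>m 1\<^sub>m n - A) *\<^sub>v u = w" unfolding u_def
    using rp w A by (subst assoc_mult_mat_vec[symmetric]) auto
  then have h: "s \<cdot>\<^sub>v u - A *\<^sub>v u = w" using char_mat_mult_vec[OF A u] by simp
  have equ: "s \<cdot>\<^sub>v u = w + A *\<^sub>v u"
  proof (rule eq_vecI)
    fix i assume "i < dim_vec (w + A *\<^sub>v u)" then have i: "i < n" using A w by auto
    have "(s \<cdot>\<^sub>v u - A *\<^sub>v u) $ i = w $ i" using h i by simp
    then show "(s \<cdot>\<^sub>v u) $ i = (w + A *\<^sub>v u) $ i" using i A u w by (simp add: diff_eq_eq)
  qed (use A u w in auto)
  then show eq: "s \<cdot>\<^sub>v (resolvent A s *\<^sub>v w) = w + A *\<^sub>v (resolvent A s *\<^sub>v w)"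
    unfolding u_def .
  have "cmod s * l2_norm u = l2_norm (w + A *\<^sub>v u)" using l2_norm_smult[of s u] equ by simp
  also have "\<dots> \<le> l2_norm w + frobenius_norm A * l2_norm u"
    using l2_norm_add_le[of w "A *\<^sub>v u"] l2_norm_mult_mat_vec_le[of u A] u A w by auto
  also have "\<dots> \<le> l2_norm w + cmod s / 2 * l2_norm u"
    using s by (intro add_left_mono mult_right_mono) auto
  finally have "cmod s * l2_norm u \<le> 2 * l2_norm w" by simp
  then show "l2_norm (resolvent A s *\<^sub>v w) \<le> 2 * l2_norm w / cmod s"
    unfolding u_def[symmetric] using s by (simp add: field_simps)
qed

lemma resolvent_form_decay:
  assumes A: "A \<in> carrier_mat n n" and c: "c \<in> carrier_vec n" and w: "w \<in> carrier_vec n"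
    and s: "cmod s \<ge> 2 * frobenius_norm A" "s \<noteq> 0" and d: "det (s \<cdot>\<^sub>m 1\<^sub>m n - A) \<noteq> 0"
  shows "cmod (resolvent_form A c w s - (c \<bullet> w) / s) \<le> 2 * l2_norm c * frobenius_norm A * l2_norm w / (cmod s)\<^sup>2"
proof -
  define u where "u = resolvent A s *\<^sub>v w"
  have u: "u \<in> carrier_vec n"
    unfolding u_def using resolvent_inverse[OF A d] w by auto
  have eq: "s \<cdot>\<^sub>v u = w + A *\<^sub>v u" and ub: "l2_norm u \<le> 2 * l2_norm w / cmod s"
    using resolvent_mult_vec_bound[OF A w s d] unfolding u_def by auto
  have "s * (c \<bullet> u) = c \<bullet> w + c \<bullet> (A *\<^sub>v u)"
    using arg_cong[OF eq, of "scalar_prod c"] c u w A by (simp add: scalar_prod_add_distrib[of _ n])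
  then have "resolvent_form A c w s - (c \<bullet> w) / s = (c \<bullet> (A *\<^sub>v u)) / s"
    unfolding resolvent_form_def u_def[symmetric] using s by (simp add: field_simps)
  then have "cmod (resolvent_form A c w s - (c \<bullet> w) / s) = cmod (c \<bullet> (A *\<^sub>v u)) / cmod s"
    by (simp add: norm_divide)
  also have "\<dots> \<le> l2_norm c * (frobenius_norm A * l2_norm u) / cmod s"
  proof (rule divide_right_mono)
    have "cmod (c \<bullet> (A *\<^sub>v u)) \<le> l2_norm c * l2_norm (A *\<^sub>v u)"
      using cmod_scalar_prod_le[of c "A *\<^sub>v u"] c u A by simp
    also have "\<dots> \<le> l2_norm c * (frobenius_norm A * l2_norm u)"
      using l2_norm_mult_mat_vec_le[of u A] u A by (simp add: mult_left_mono)
    finally show "cmod (c \<bullet> (A *\<^sub>v u)) \<le> l2_norm c * (frobenius_norm A * l2_norm u)" .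
  qed simp
  also have "\<dots> \<le> l2_norm c * (frobenius_norm A * (2 * l2_norm w / cmod s)) / cmod s"
    using ub by (intro divide_right_mono mult_left_mono) auto
  also have "\<dots> = 2 * l2_norm c * frobenius_norm A * l2_norm w / (cmod s)\<^sup>2"
    by (simp add: power2_eq_square)
  finally show ?thesis .
qed

definition hurwitz :: "complex mat \<Rightarrow> bool" where
  "hurwitz A \<longleftrightarrow> (\<forall>s. 0 \<le> Re s \<longrightarrow> det (s \<cdot>\<^sub>m 1\<^sub>m (dim_row A) - A) \<noteq> 0)"

lemma hurwitz_det_nonzero:
  assumes "hurwitz A" "A \<in> carrier_mat n n" "0 \<le> Re s"
  shows "det (s \<cdot>\<^sub>m 1\<^sub>m n - A) \<noteq> 0"
  using assms by (auto simp: hurwitz_def)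

text \<open>Only the leading term \<open>c \<bullet> w / s\<close> of the resolvent form contributes to the half circle integral
  in the limit, and it contributes \<open>\<pi> i (c \<bullet> w)\<close>.\<close>

lemma resolvent_form_imaginary_axis_integral:
  assumes A: "A \<in> carrier_mat n n" and c: "c \<in> carrier_vec n" and w: "w \<in> carrier_vec n"
    and "hurwitz A"
  shows "((\<lambda>L. integral {-L..L} (\<lambda>\<mu>. resolvent_form A c w (Complex 0 \<mu>))) \<longlongrightarrow> pi * (c \<bullet> w)) at_top"
proof -
  note nz = hurwitz_det_nonzero[OF \<open>hurwitz A\<close> A]
  define R0 where "R0 = max (2 * frobenius_norm A) 1"
  define B where "B = 2 * l2_norm c * frobenius_norm A * l2_norm w"
  have B0: "0 \<le> B" unfolding B_def by simp
  have holo: "resolvent_form A c w holomorphic_on {s. 0 \<le> Re s}"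
    by (rule holomorphic_on_subset[OF holomorphic_on_resolvent_form[OF A c w]]) (use nz in auto)
  have decay: "cmod (resolvent_form A c w s - (c \<bullet> w) / s) \<le> B / (cmod s)\<^sup>2"
    if "0 \<le> Re s" "R0 \<le> cmod s" for s
  proof -
    have "s \<noteq> 0" using that unfolding R0_def by auto
    moreover have "2 * frobenius_norm A \<le> cmod s" using that unfolding R0_def by auto
    ultimately show ?thesis unfolding B_def
      using resolvent_form_decay[OF A c w, of s] nz[OF that(1)] by auto
  qed
  have aux: "norm (integral {-L..L} (\<lambda>\<mu>. resolvent_form A c w (Complex 0 \<mu>)) - pi * (c \<bullet> w)) \<le> B * pi / L"
    if "L \<ge> R0" for L
    using imaginary_axis_integral_estimate[OF holo decay B0, of L] that by (auto simp: R0_def)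
  have "((\<lambda>L. integral {-L..L} (\<lambda>\<mu>. resolvent_form A c w (Complex 0 \<mu>)) - pi * (c \<bullet> w)) \<longlongrightarrow> 0) at_top"
  proof (rule Lim_null_comparison)
    show "\<forall>\<^sub>F L in at_top. norm (integral {-L..L} (\<lambda>\<mu>. resolvent_form A c w (Complex 0 \<mu>)) - pi * (c \<bullet> w)) \<le> B * pi / L"
      using eventually_ge_at_top[of R0] by eventually_elim (use aux in auto)
    show "((\<lambda>L. B * pi / L) \<longlongrightarrow> 0) at_top"
      by (intro tendsto_divide_0[OF tendsto_const] filterlim_at_top_imp_at_infinity filterlim_ident)
  qed
  then show ?thesis
    by (rule LIM_zero_cancel)
qed

lemma continuous_on_resolvent_form_imaginary_axis:
  assumes "A \<in> carrier_mat n n" "c \<in> carrier_vec n" "w \<in> carrier_vec n" "hurwitz A"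
  shows "continuous_on UNIV (\<lambda>\<mu>. resolvent_form A c w (Complex 0 \<mu>))"
proof (rule continuous_on_compose2[of "{s. det (s \<cdot>\<^sub>m 1\<^sub>m n - A) \<noteq> 0}" "resolvent_form A c w"
      UNIV "\<lambda>\<mu>. Complex 0 \<mu>"])
  show "continuous_on {s. det (s \<cdot>\<^sub>m 1\<^sub>m n - A) \<noteq> 0} (resolvent_form A c w)"
    using holomorphic_on_resolvent_form[OF assms(1-3)] by (rule holomorphic_on_imp_continuous_on)
  have "continuous_on UNIV (\<lambda>\<mu>::real. \<i> * complex_of_real \<mu>)"
    by (intro continuous_intros)
  moreover have "(\<lambda>\<mu>::real. \<i> * complex_of_real \<mu>) = Complex 0"
    by (auto simp: complex_eq_iff)
  ultimately show "continuous_on UNIV (\<lambda>\<mu>::real. Complex 0 \<mu>)"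
    by metis
qed (use assms(1,4) in \<open>auto simp: hurwitz_def\<close>)

lemma nonneg_has_integral_UNIV_if_symmetric_limit:
  fixes f :: "real \<Rightarrow> real"
  assumes cont: "continuous_on UNIV f" and nn: "\<And>x. 0 \<le> f x"
    and lim: "((\<lambda>L. integral {-L..L} f) \<longlongrightarrow> l) at_top"
  shows "(f has_integral l) UNIV"
proof -
  define fk where "fk k x = (if x \<in> {-real k..real k} then f x else 0)" for k :: nat and x
  have int_fk: "fk k integrable_on UNIV" for k
    unfolding fk_def integrable_restrict_UNIV
    by (rule integrable_continuous_interval) (rule continuous_on_subset[OF cont], auto)
  have ifk: "integral UNIV (fk k) = integral {-real k..real k} f" for k
    unfolding fk_def by (rule integral_restrict_UNIV)
  have mono: "fk k x \<le> fk (Suc k) x" for k x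
    unfolding fk_def using nn[of x] by auto
  have ptw: "((\<lambda>k. fk k x) \<longlongrightarrow> f x) sequentially" for x
  proof (rule tendsto_eventually)
    obtain K :: nat where K: "\<bar>x\<bar> \<le> real K" using real_arch_simple by blast
    show "\<forall>\<^sub>F k in sequentially. fk k x = f x"
      using eventually_ge_at_top[of K]
      by eventually_elim (use K in \<open>auto simp: fk_def\<close>)
  qed
  have seq: "((\<lambda>k. integral {-real k..real k} f) \<longlongrightarrow> l) sequentially"
    using filterlim_compose[OF lim filterlim_real_sequentially] by (simp add: o_def)
  have "bounded (range (\<lambda>k. integral UNIV (fk k)))"
    unfolding ifk using convergent_imp_bounded[OF seq] by (simp add: o_def)
  from monotone_convergence_increasing[OF int_fk mono ptw this]
  have res: "f integrable_on UNIV" "((\<lambda>k. integral UNIV (fk k)) \<longlongrightarrow> integral UNIV f) sequentially"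
    by auto
  moreover have "integral UNIV f = l"
    using res(2) seq unfolding ifk by (rule LIMSEQ_unique)
  ultimately show ?thesis
    using has_integral_integral by blast
qed

lemma nonneg_Re_resolvent_form_has_integral:
  assumes A: "A \<in> carrier_mat n n" and c: "c \<in> carrier_vec n" and w: "w \<in> carrier_vec n"
    and hurwitz: "hurwitz A" and nonneg: "\<And>\<mu>. 0 \<le> Re (resolvent_form A c w (Complex 0 \<mu>))"
  shows "((\<lambda>\<mu>. Re (resolvent_form A c w (Complex 0 \<mu>))) has_integral pi * Re (c \<bullet> w)) UNIV"
proof (rule nonneg_has_integral_UNIV_if_symmetric_limit[OF _ nonneg])
  note cont = continuous_on_resolvent_form_imaginary_axis[OF A c w hurwitz]
  then show "continuous_on UNIV (\<lambda>\<mu>. Re (resolvent_form A c w (Complex 0 \<mu>)))"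
    by (intro continuous_intros)
  have "integral {-L..L} (\<lambda>\<mu>. Re (resolvent_form A c w (Complex 0 \<mu>)))
      = Re (integral {-L..L} (\<lambda>\<mu>. resolvent_form A c w (Complex 0 \<mu>)))" for L
    using integral_linear[OF integrable_continuous_interval[OF continuous_on_subset[OF cont]] bounded_linear_Re]
    by (simp add: o_def)
  then show "((\<lambda>L. integral {-L..L} (\<lambda>\<mu>. Re (resolvent_form A c w (Complex 0 \<mu>)))) \<longlongrightarrow> pi * Re (c \<bullet> w)) at_top"
    using tendsto_Re[OF resolvent_form_imaginary_axis_integral[OF A c w hurwitz]] by simp
qed

section \<open>Lyapunov inequalities and the H2 norm\<close>

definition cvec :: "real vec \<Rightarrow> complex vec" where
  "cvec v = map_vec complex_of_real v"

definition Re_vec :: "complex vec \<Rightarrow> real vec" where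
  "Re_vec v = map_vec Re v"

definition Im_vec :: "complex vec \<Rightarrow> real vec" where
  "Im_vec v = map_vec Im v"

lemma carrier_vec_cvec [simp]: "cvec v \<in> carrier_vec n \<longleftrightarrow> v \<in> carrier_vec n"
  and carrier_vec_Re_vec [simp]: "Re_vec u \<in> carrier_vec n \<longleftrightarrow> u \<in> carrier_vec n"
  and carrier_vec_Im_vec [simp]: "Im_vec u \<in> carrier_vec n \<longleftrightarrow> u \<in> carrier_vec n"
  unfolding cvec_def Re_vec_def Im_vec_def carrier_vec_def by auto

lemma dim_vec_cvec [simp]: "dim_vec (cvec v) = dim_vec v"
  and dim_vec_Re_vec [simp]: "dim_vec (Re_vec u) = dim_vec u"
  and dim_vec_Im_vec [simp]: "dim_vec (Im_vec u) = dim_vec u"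
  unfolding cvec_def Re_vec_def Im_vec_def by auto

lemma carrier_mat_cmat [simp]: "cmat M \<in> carrier_mat nr nc \<longleftrightarrow> M \<in> carrier_mat nr nc"
  unfolding cmat_def by simp

lemma Re_Im_cmat_mult_vec:
  assumes "M \<in> carrier_mat nr nc" "u \<in> carrier_vec nc" "i < nr"
  shows "Re ((cmat M *\<^sub>v u) $ i) = (M *\<^sub>v Re_vec u) $ i"
    and "Im ((cmat M *\<^sub>v u) $ i) = (M *\<^sub>v Im_vec u) $ i"
  using assms by (auto simp: cmat_def Re_vec_def Im_vec_def scalar_prod_def)

lemma Re_Im_scalar_prod_cvec:
  assumes "u \<in> carrier_vec n" "v \<in> carrier_vec n"
  shows "Re (u \<bullet> cvec v) = Re_vec u \<bullet> v" and "Im (u \<bullet> cvec v) = Im_vec u \<bullet> v"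
  using assms by (auto simp: cvec_def Re_vec_def Im_vec_def scalar_prod_def)

lemma cmat_eigenvector_Re_Im:
  fixes N :: "real mat"
  assumes N: "N \<in> carrier_mat n n" and det: "det (s \<cdot>\<^sub>m 1\<^sub>m n - cmat N) = 0"
  obtains a b where "a \<in> carrier_vec n" "b \<in> carrier_vec n" "a \<noteq> 0\<^sub>v n \<or> b \<noteq> 0\<^sub>v n"
    "N *\<^sub>v a = Re s \<cdot>\<^sub>v a - Im s \<cdot>\<^sub>v b" "N *\<^sub>v b = Im s \<cdot>\<^sub>v a + Re s \<cdot>\<^sub>v b"
proof -
  have Nc: "cmat N \<in> carrier_mat n n" and "s \<cdot>\<^sub>m 1\<^sub>m n - cmat N \<in> carrier_mat n n"
    using N by auto
  then obtain u where u: "u \<in> carrier_vec n" "u \<noteq> 0\<^sub>v n" "(s \<cdot>\<^sub>m 1\<^sub>m n - cmat N) *\<^sub>v u = 0\<^sub>v n"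
    using det det_0_iff_vec_prod_zero_field[of "s \<cdot>\<^sub>m 1\<^sub>m n - cmat N" n] by blast
  have eig: "(cmat N *\<^sub>v u) $ i = s * u $ i" if "i < n" for i
  proof -
    have "(s \<cdot>\<^sub>v u - cmat N *\<^sub>v u) $ i = 0"
      using u(3) that char_mat_mult_vec[OF Nc u(1), of s] by simp
    then show ?thesis using that u(1) Nc by simp
  qed
  show thesis
  proof
    show "Re_vec u \<in> carrier_vec n" "Im_vec u \<in> carrier_vec n"
      using u by auto
    show "Re_vec u \<noteq> 0\<^sub>v n \<or> Im_vec u \<noteq> 0\<^sub>v n"
      using u by (auto simp: Re_vec_def Im_vec_def vec_eq_iff complex_eq_iff)
    show "N *\<^sub>v Re_vec u = Re s \<cdot>\<^sub>v Re_vec u - Im s \<cdot>\<^sub>v Im_vec u"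
      and "N *\<^sub>v Im_vec u = Im s \<cdot>\<^sub>v Re_vec u + Re s \<cdot>\<^sub>v Im_vec u"
      using N u Re_Im_cmat_mult_vec[OF N u(1)] eig
      by (auto intro!: eq_vecI simp: Re_vec_def Im_vec_def add.commute)
  qed
qed

lemma hurwitz_if_Lyapunov:
  fixes N P :: "real mat"
  assumes N: "N \<in> carrier_mat n n" and P: "P \<in> carrier_mat n n" "transpose_mat P = P"
    and P_psd: "\<And>x. x \<in> carrier_vec n \<Longrightarrow> 0 \<le> x \<bullet> (P *\<^sub>v x)"
    and Lyap: "\<And>x. x \<in> carrier_vec n \<Longrightarrow> x \<noteq> 0\<^sub>v n \<Longrightarrow> x \<bullet> ((transpose_mat N * P + P * N) *\<^sub>v x) < 0"
  shows "hurwitz (cmat N)"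
  unfolding hurwitz_def
proof (intro allI impI notI)
  fix s :: complex
  assume s: "0 \<le> Re s" and "det (s \<cdot>\<^sub>m 1\<^sub>m (dim_row (cmat N)) - cmat N) = 0"
  moreover have "dim_row (cmat N) = n"
    using N by auto
  ultimately obtain a b where a: "a \<in> carrier_vec n" and b: "b \<in> carrier_vec n" and "a \<noteq> 0\<^sub>v n \<or> b \<noteq> 0\<^sub>v n"
    and Na: "N *\<^sub>v a = Re s \<cdot>\<^sub>v a - Im s \<cdot>\<^sub>v b" and Nb: "N *\<^sub>v b = Im s \<cdot>\<^sub>v a + Re s \<cdot>\<^sub>v b"
    using cmat_eigenvector_Re_Im[OF N] by metis
  have "a \<bullet> (P *\<^sub>v b) = b \<bullet> (P *\<^sub>v a)"
    by (rule scalar_prod_symmetric_mat[OF P a b])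
  then have "a \<bullet> ((transpose_mat N * P + P * N) *\<^sub>v a) + b \<bullet> ((transpose_mat N * P + P * N) *\<^sub>v b)
      = 2 * Re s * (a \<bullet> (P *\<^sub>v a) + b \<bullet> (P *\<^sub>v b))"
    unfolding Lyapunov_quadratic_form[OF N P a] Lyapunov_quadratic_form[OF N P b] Na Nb
    using P a b by (simp add: scalar_prod_add_distrib[of _ n] scalar_prod_minus_distrib[of _ n]
        comm_scalar_prod[of "P *\<^sub>v _" n] algebra_simps)
  also have "\<dots> \<ge> 0"
    using P_psd[OF a] P_psd[OF b] s by simp
  finally have "0 \<le> a \<bullet> ((transpose_mat N * P + P * N) *\<^sub>v a) + b \<bullet> ((transpose_mat N * P + P * N) *\<^sub>v b)" .
  moreover have "x \<bullet> ((transpose_mat N * P + P * N) *\<^sub>v x) \<le> 0" if "x \<in> carrier_vec n" for x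
  proof (cases "x = 0\<^sub>v n")
    case True
    have "(transpose_mat N * P + P * N) *\<^sub>v x \<in> carrier_vec n"
      using N P that by (metis add_carrier_mat mult_carrier_mat mult_mat_vec_carrier transpose_carrier_mat)
    then show ?thesis using True by simp
  qed (use Lyap[OF that] in \<open>auto intro: less_imp_le\<close>)
  ultimately show False
    using Lyap[OF a] Lyap[OF b] \<open>a \<noteq> 0\<^sub>v n \<or> b \<noteq> 0\<^sub>v n\<close> a b by fastforce
qed

text \<open>Here and below the hypothesis \<open>Gram\<close> is the quadratic-form version of \<open>B B\<^sup>T \<le> - \<gamma> (N V + V N\<^sup>T)\<close>.\<close>

lemma Gramian_inequality_resolvent_real:
  fixes N V B :: "real mat" and a b c :: "real vec"
  assumes N: "N \<in> carrier_mat n n" and V: "V \<in> carrier_mat n n" "transpose_mat V = V"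
    and Gram: "\<And>x. x \<in> carrier_vec n \<Longrightarrow>
      (transpose_mat B *\<^sub>v x) \<bullet> (transpose_mat B *\<^sub>v x) \<le> - 2 * \<gamma> * ((transpose_mat N *\<^sub>v x) \<bullet> (V *\<^sub>v x))"
    and a: "a \<in> carrier_vec n" and b: "b \<in> carrier_vec n" and c: "c \<in> carrier_vec n"
    and Na: "transpose_mat N *\<^sub>v a = - (\<mu> \<cdot>\<^sub>v b) - c" and Nb: "transpose_mat N *\<^sub>v b = \<mu> \<cdot>\<^sub>v a"
  shows "(transpose_mat B *\<^sub>v a) \<bullet> (transpose_mat B *\<^sub>v a) + (transpose_mat B *\<^sub>v b) \<bullet> (transpose_mat B *\<^sub>v b)
         \<le> 2 * \<gamma> * (a \<bullet> (V *\<^sub>v c))"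
proof -
  have Va: "V *\<^sub>v a \<in> carrier_vec n" and Vb: "V *\<^sub>v b \<in> carrier_vec n"
    using V a b by auto
  have "(- (\<mu> \<cdot>\<^sub>v b) - c) \<bullet> w = - \<mu> * (b \<bullet> w) - c \<bullet> w" if "w \<in> carrier_vec n" for w
    using that b c by (simp add: scalar_prod_def sum_subtractf sum_negf sum_distrib_left algebra_simps)
  then have "(transpose_mat N *\<^sub>v a) \<bullet> (V *\<^sub>v a) = - \<mu> * (b \<bullet> (V *\<^sub>v a)) - c \<bullet> (V *\<^sub>v a)"
    unfolding Na using Va by blast
  moreover have "(transpose_mat N *\<^sub>v b) \<bullet> (V *\<^sub>v b) = \<mu> * (a \<bullet> (V *\<^sub>v b))"
    unfolding Nb using a Vb by simp
  moreover have "b \<bullet> (V *\<^sub>v a) = a \<bullet> (V *\<^sub>v b)" "c \<bullet> (V *\<^sub>v a) = a \<bullet> (V *\<^sub>v c)"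
    using scalar_prod_symmetric_mat[OF V] a b c by auto
  ultimately have "(transpose_mat N *\<^sub>v a) \<bullet> (V *\<^sub>v a) + (transpose_mat N *\<^sub>v b) \<bullet> (V *\<^sub>v b) = - (a \<bullet> (V *\<^sub>v c))"
    by simp
  then have "- 2 * \<gamma> * ((transpose_mat N *\<^sub>v a) \<bullet> (V *\<^sub>v a)) + - 2 * \<gamma> * ((transpose_mat N *\<^sub>v b) \<bullet> (V *\<^sub>v b))
      = 2 * \<gamma> * (a \<bullet> (V *\<^sub>v c))"
    unfolding distrib_left[symmetric] by simp
  then show ?thesis
    using Gram[OF a] Gram[OF b] by linarith
qed

lemma adjoint_resolvent_Re_Im:
  fixes N :: "real mat" and c :: "real vec"
  assumes N: "N \<in> carrier_mat n n" and c: "c \<in> carrier_vec n"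
    and det: "det (Complex 0 \<mu> \<cdot>\<^sub>m 1\<^sub>m n - cmat N) \<noteq> 0"
  defines "y \<equiv> transpose_mat (resolvent (cmat N) (Complex 0 \<mu>)) *\<^sub>v cvec c"
  shows "transpose_mat N *\<^sub>v Re_vec y = - (\<mu> \<cdot>\<^sub>v Im_vec y) - c"
    and "transpose_mat N *\<^sub>v Im_vec y = \<mu> \<cdot>\<^sub>v Re_vec y"
proof -
  define s G where "s = Complex 0 \<mu>" and "G = resolvent (cmat N) s"
  have Nc: "cmat N \<in> carrier_mat n n" and NTc: "cmat (transpose_mat N) \<in> carrier_mat n n"
    and NT: "transpose_mat N \<in> carrier_mat n n"
    using N by auto
  note G_inv = resolvent_inverse[OF Nc det[folded s_def], folded G_def]
  have G: "G \<in> carrier_mat n n" and M: "s \<cdot>\<^sub>m 1\<^sub>m n - cmat N \<in> carrier_mat n n"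
    using G_inv Nc by auto
  have y: "y \<in> carrier_vec n"
    unfolding y_def using G c by (auto simp: G_def s_def)
  have "transpose_mat (s \<cdot>\<^sub>m 1\<^sub>m n - cmat N) *\<^sub>v y = transpose_mat (G * (s \<cdot>\<^sub>m 1\<^sub>m n - cmat N)) *\<^sub>v cvec c"
    unfolding y_def G_def[symmetric] s_def[symmetric] using G M c
    by (simp add: transpose_mult[OF G M] assoc_mult_mat_vec[of _ n n _ n])
  also have "\<dots> = cvec c"
    using G_inv c by simp
  also have "transpose_mat (s \<cdot>\<^sub>m 1\<^sub>m n - cmat N) = s \<cdot>\<^sub>m 1\<^sub>m n - cmat (transpose_mat N)"
    using N by (intro eq_matI) (auto simp: cmat_def)
  finally have y_eq: "s \<cdot>\<^sub>v y - cmat (transpose_mat N) *\<^sub>v y = cvec c"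
    unfolding char_mat_mult_vec[OF NTc y] .
  have eq: "s * y $ j - (cmat (transpose_mat N) *\<^sub>v y) $ j = c $ j" if "j < n" for j
  proof -
    from y_eq have "(s \<cdot>\<^sub>v y - cmat (transpose_mat N) *\<^sub>v y) $ j = cvec c $ j"
      by simp
    then show ?thesis using that y N c by (simp add: cvec_def)
  qed
  have Re_eq: "- \<mu> * Im_vec y $ j - (transpose_mat N *\<^sub>v Re_vec y) $ j = c $ j"
    and Im_eq: "\<mu> * Re_vec y $ j - (transpose_mat N *\<^sub>v Im_vec y) $ j = 0" if "j < n" for j
    using arg_cong[OF eq[OF that], of Re] arg_cong[OF eq[OF that], of Im]
      Re_Im_cmat_mult_vec[OF NT y that] that y
    by (simp_all add: s_def Re_vec_def Im_vec_def)
  show "transpose_mat N *\<^sub>v Re_vec y = - (\<mu> \<cdot>\<^sub>v Im_vec y) - c" "transpose_mat N *\<^sub>v Im_vec y = \<mu> \<cdot>\<^sub>v Re_vec y"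
    using N y c Re_eq Im_eq by (auto intro!: eq_vecI simp: algebra_simps)
qed

lemma Gramian_inequality_resolvent:
  fixes N V B :: "real mat" and c :: "real vec"
  assumes N: "N \<in> carrier_mat n n" and V: "V \<in> carrier_mat n n" "transpose_mat V = V"
    and B: "B \<in> carrier_mat n q" and c: "c \<in> carrier_vec n"
    and Gram: "\<And>x. x \<in> carrier_vec n \<Longrightarrow>
      (transpose_mat B *\<^sub>v x) \<bullet> (transpose_mat B *\<^sub>v x) \<le> - 2 * \<gamma> * ((transpose_mat N *\<^sub>v x) \<bullet> (V *\<^sub>v x))"
    and det: "det (Complex 0 \<mu> \<cdot>\<^sub>m 1\<^sub>m n - cmat N) \<noteq> 0"
  shows "(\<Sum>k<q. (cmod (resolvent_form (cmat N) (cvec c) (cvec (col B k)) (Complex 0 \<mu>)))\<^sup>2)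
          \<le> 2 * \<gamma> * Re (resolvent_form (cmat N) (cvec c) (cvec (V *\<^sub>v c)) (Complex 0 \<mu>))"
proof -
  define G where "G = resolvent (cmat N) (Complex 0 \<mu>)"
  have G: "G \<in> carrier_mat n n"
    unfolding G_def using resolvent_inverse[OF _ det] N by auto
  \<comment> \<open>the resolvent form is linear in \<open>y = G\<^sup>T c\<close>, whose real and imaginary parts are real vectors\<close>
  define y where "y = transpose_mat G *\<^sub>v cvec c"
  have y: "y \<in> carrier_vec n"
    unfolding y_def using G c by auto
  have form: "resolvent_form (cmat N) (cvec c) (cvec \<beta>) (Complex 0 \<mu>) = y \<bullet> cvec \<beta>" if "\<beta> \<in> carrier_vec n" for \<beta>
    unfolding y_def resolvent_form_def G_def[symmetric]
    using transpose_vec_mult_scalar[OF G, of "cvec \<beta>" "cvec c"] that c by simp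
  have "(cmod (resolvent_form (cmat N) (cvec c) (cvec (col B k)) (Complex 0 \<mu>)))\<^sup>2
      = (Re_vec y \<bullet> col B k)\<^sup>2 + (Im_vec y \<bullet> col B k)\<^sup>2" if "k < q" for k
    using that B y Re_Im_scalar_prod_cvec[OF y, of "col B k"] by (simp add: form cmod_power2)
  moreover have "Re (resolvent_form (cmat N) (cvec c) (cvec (V *\<^sub>v c)) (Complex 0 \<mu>)) = Re_vec y \<bullet> (V *\<^sub>v c)"
    using V c y Re_Im_scalar_prod_cvec[OF y, of "V *\<^sub>v c"] by (simp add: form)
  moreover note Gramian_inequality_resolvent_real[OF N V Gram _ _ c
      adjoint_resolvent_Re_Im[OF N c det, folded G_def, folded y_def]]
  ultimately show ?thesis
    using B y by (simp add: transpose_mult_vec_self_scalar_prod sum.distrib)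
qed

lemma transfer_carrier:
  assumes "C \<in> carrier_mat p n" "B \<in> carrier_mat n q"
  shows "transfer C N B s \<in> carrier_mat p q"
  using assms by (auto simp: transfer_def cmat_def)

lemma transfer_index:
  assumes C: "C \<in> carrier_mat p n" and N: "N \<in> carrier_mat n n" and B: "B \<in> carrier_mat n q"
    and det: "det (s \<cdot>\<^sub>m 1\<^sub>m n - cmat N) \<noteq> 0" and i: "i < p" and k: "k < q"
  shows "transfer C N B s $$ (i, k) = resolvent_form (cmat N) (cvec (row C i)) (cvec (col B k)) s"
proof -
  have Nc: "cmat N \<in> carrier_mat n n" using N by simp
  have G: "resolvent (cmat N) s \<in> carrier_mat n n"
    using resolvent_inverse[OF Nc det] by simp
  have "transfer C N B s = cmat C * (resolvent (cmat N) s * cmat B)"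
    unfolding transfer_def resolvent_def using C N B G
    by (simp add: resolvent_def assoc_mult_mat[of _ p n _ n _ q] cmat_def)
  also have "\<dots> $$ (i, k) = row (cmat C) i \<bullet> col (resolvent (cmat N) s * cmat B) k"
    using C B G i k by simp
  also have "col (resolvent (cmat N) s * cmat B) k = resolvent (cmat N) s *\<^sub>v col (cmat B) k"
    using B G k by (intro col_mult2) auto
  also have "row (cmat C) i = cvec (row C i)"
    using C i by (auto simp: cmat_def cvec_def)
  also have "col (cmat B) k = cvec (col B k)"
    using B k by (auto simp: cmat_def cvec_def)
  finally show ?thesis
    unfolding resolvent_form_def .
qed

lemma H2_integrand_index:
  assumes "T (\<i> * complex_of_real \<mu>) \<in> carrier_mat p q" "i < p" "j < p"
  shows "H2_integrand T \<mu> $$ (i, j)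
    = (\<Sum>k<q. T (\<i> * complex_of_real \<mu>) $$ (i, k) * cnj (T (\<i> * complex_of_real \<mu>) $$ (j, k)))"
  using assms unfolding H2_integrand_def
  by (auto simp: scalar_prod_def mat_adjoint_def mat_of_rows_index lessThan_atLeast0 intro!: sum.cong)

lemma continuous_on_transfer_index:
  assumes C: "C \<in> carrier_mat p n" and N: "N \<in> carrier_mat n n" and B: "B \<in> carrier_mat n q"
    and "hurwitz (cmat N)" and i: "i < p" and k: "k < q"
  shows "continuous_on UNIV (\<lambda>\<mu>. transfer C N B (Complex 0 \<mu>) $$ (i, k))"
proof -
  have "continuous_on UNIV (\<lambda>\<mu>. resolvent_form (cmat N) (cvec (row C i)) (cvec (col B k)) (Complex 0 \<mu>))"
    using C B N i k assms(4) by (intro continuous_on_resolvent_form_imaginary_axis) auto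
  then show ?thesis
    using transfer_index[OF C N B hurwitz_det_nonzero[OF assms(4) carrier_mat_cmat[THEN iffD2, OF N]] i k] by simp
qed

lemma transfer_row_energy_integral_le:
  fixes N V B C :: "real mat"
  assumes N: "N \<in> carrier_mat n n" and V: "V \<in> carrier_mat n n" "transpose_mat V = V"
    and B: "B \<in> carrier_mat n q" and C: "C \<in> carrier_mat p n" and i: "i < p"
    and hurwitz: "hurwitz (cmat N)" and \<gamma>: "\<gamma> > 0"
    and Gram: "\<And>x. x \<in> carrier_vec n \<Longrightarrow>
      (transpose_mat B *\<^sub>v x) \<bullet> (transpose_mat B *\<^sub>v x) \<le> - 2 * \<gamma> * ((transpose_mat N *\<^sub>v x) \<bullet> (V *\<^sub>v x))"
  defines "h \<equiv> \<lambda>\<mu>. \<Sum>k<q. (cmod (transfer C N B (Complex 0 \<mu>) $$ (i, k)))\<^sup>2"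
  shows "h integrable_on UNIV" and "integral UNIV h \<le> 2 * pi * \<gamma> * (row C i \<bullet> (V *\<^sub>v row C i))"
proof -
  define c where "c = row C i"
  have c: "c \<in> carrier_vec n" and Nc: "cmat N \<in> carrier_mat n n"
    using C N i by (auto simp: c_def)
  note det = hurwitz_det_nonzero[OF hurwitz carrier_mat_cmat[THEN iffD2, OF N]]
  define g where "g \<mu> = Re (resolvent_form (cmat N) (cvec c) (cvec (V *\<^sub>v c)) (Complex 0 \<mu>))" for \<mu>
  have h_le: "h \<mu> \<le> 2 * \<gamma> * g \<mu>" for \<mu>
    using Gramian_inequality_resolvent[OF N V B c Gram det] transfer_index[OF C N B det i]
    unfolding h_def g_def c_def by simp
  have h_nonneg: "0 \<le> h \<mu>" for \<mu>
    unfolding h_def by (simp add: sum_nonneg)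
  have g_nonneg: "0 \<le> g \<mu>" for \<mu>
  proof -
    have "0 \<le> (2 * \<gamma>) * g \<mu>"
      using h_le[of \<mu>] h_nonneg[of \<mu>] by linarith
    then show ?thesis
      using \<gamma> by (simp add: zero_le_mult_iff)
  qed
  have "cvec c \<bullet> cvec (V *\<^sub>v c) = complex_of_real (c \<bullet> (V *\<^sub>v c))"
    using c V by (simp add: cvec_def scalar_prod_def)
  then have g_int: "(g has_integral pi * (c \<bullet> (V *\<^sub>v c))) UNIV"
    using nonneg_Re_resolvent_form_has_integral[OF Nc _ _ hurwitz, of "cvec c" "cvec (V *\<^sub>v c)"] c V g_nonneg
    unfolding g_def by simp
  have h_cont: "continuous_on UNIV h"
    unfolding h_def
    by (intro continuous_intros continuous_on_transfer_index[OF C N B hurwitz i]) simp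
  have g2_int: "(\<lambda>\<mu>. 2 * \<gamma> * g \<mu>) integrable_on UNIV"
    using has_integral_mult_right[OF g_int] by blast
  show h_int: "h integrable_on UNIV"
    by (rule measurable_bounded_by_integrable_imp_integrable[OF
          continuous_imp_measurable_on_sets_lebesgue[OF h_cont] g2_int])
       (use h_le h_nonneg in auto)
  have "integral UNIV h \<le> integral UNIV (\<lambda>\<mu>. 2 * \<gamma> * g \<mu>)"
    using h_int g2_int h_le by (rule integral_le)
  also have "\<dots> = 2 * pi * \<gamma> * (c \<bullet> (V *\<^sub>v c))"
    using integral_unique[OF has_integral_mult_right[OF g_int, of "2 * \<gamma>"]] by simp
  finally show "integral UNIV h \<le> 2 * pi * \<gamma> * (row C i \<bullet> (V *\<^sub>v row C i))"
    unfolding c_def .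
qed

lemma product_le_sum_squares:
  fixes x y :: real
  shows "x * y \<le> x\<^sup>2 + y\<^sup>2"
  using sum_squares_bound[of x y] zero_le_power2[of x] zero_le_power2[of y] by linarith

lemma H2_norm_eq_row_energies:
  fixes T :: "complex \<Rightarrow> complex mat"
  assumes T: "\<And>s. T s \<in> carrier_mat p q"
    and cont: "\<And>i k. i < p \<Longrightarrow> k < q \<Longrightarrow> continuous_on UNIV (\<lambda>\<mu>. T (Complex 0 \<mu>) $$ (i, k))"
    and h_int: "\<And>i. i < p \<Longrightarrow> (\<lambda>\<mu>. \<Sum>k<q. (cmod (T (Complex 0 \<mu>) $$ (i, k)))\<^sup>2) integrable_on UNIV"
  shows "H2_finite p T"
    and "H2_norm p T = sqrt (1 / (2 * pi) * (\<Sum>i<p. integral UNIV (\<lambda>\<mu>. \<Sum>k<q. (cmod (T (Complex 0 \<mu>) $$ (i, k)))\<^sup>2)))"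
proof -
  define h where "h i \<mu> = (\<Sum>k<q. (cmod (T (Complex 0 \<mu>) $$ (i, k)))\<^sup>2)" for i \<mu>
  have entry: "H2_integrand T \<mu> $$ (i, j) = (\<Sum>k<q. T (Complex 0 \<mu>) $$ (i, k) * cnj (T (Complex 0 \<mu>) $$ (j, k)))"
    if "i < p" "j < p" for i j \<mu>
  proof -
    have "\<i> * complex_of_real \<mu> = Complex 0 \<mu>"
      by (simp add: complex_eq_iff)
    then show ?thesis
      using H2_integrand_index[of T \<mu> p q, OF T that] by simp
  qed
  show "H2_finite p T"
    unfolding H2_finite_def
  proof (intro allI impI)
    fix i j assume ij: "i < p" "j < p"
    have cont_ij: "continuous_on UNIV (\<lambda>\<mu>. H2_integrand T \<mu> $$ (i, j))"
      unfolding entry[OF ij] using ij by (intro continuous_intros cont) auto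
    have "cmod (H2_integrand T \<mu> $$ (i, j)) \<le> h i \<mu> + h j \<mu>" for \<mu>
    proof -
      have "cmod (H2_integrand T \<mu> $$ (i, j)) \<le> (\<Sum>k<q. cmod (T (Complex 0 \<mu>) $$ (i, k)) * cmod (T (Complex 0 \<mu>) $$ (j, k)))"
        unfolding entry[OF ij] by (rule order_trans[OF norm_sum]) (simp add: norm_mult)
      also have "\<dots> \<le> h i \<mu> + h j \<mu>"
        unfolding h_def sum.distrib[symmetric] by (intro sum_mono) (simp add: product_le_sum_squares)
      finally show ?thesis .
    qed
    moreover have "(\<lambda>\<mu>. h i \<mu> + h j \<mu>) integrable_on UNIV"
      using h_int[OF ij(1)] h_int[OF ij(2)] unfolding h_def by (rule integrable_add)
    ultimately show "(\<lambda>\<mu>. H2_integrand T \<mu> $$ (i, j)) integrable_on UNIV"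
      by (intro measurable_bounded_by_integrable_imp_integrable[OF
          continuous_imp_measurable_on_sets_lebesgue[OF cont_ij]]) auto
  qed
  have "integral UNIV (\<lambda>\<mu>. H2_integrand T \<mu> $$ (i, i)) = complex_of_real (integral UNIV (h i))" if "i < p" for i
  proof -
    have "H2_integrand T \<mu> $$ (i, i) = complex_of_real (h i \<mu>)" for \<mu>
      unfolding entry[OF that that] h_def by (simp only: of_real_sum complex_norm_square)
    then show ?thesis
      using integral_linear[OF h_int[OF that, folded h_def] bounded_linear_of_real] by (simp add: o_def)
  qed
  then show "H2_norm p T = sqrt (1 / (2 * pi) * (\<Sum>i<p. integral UNIV (\<lambda>\<mu>. \<Sum>k<q. (cmod (T (Complex 0 \<mu>) $$ (i, k)))\<^sup>2)))"
    unfolding H2_norm_def mtrace_def h_def by simp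
qed

theorem H2_norm_le_Gramian_bound:
  fixes N V B C :: "real mat"
  assumes N: "N \<in> carrier_mat n n" and V: "V \<in> carrier_mat n n" "transpose_mat V = V"
    and B: "B \<in> carrier_mat n q" and C: "C \<in> carrier_mat p n"
    and hurwitz: "hurwitz (cmat N)" and \<gamma>: "\<gamma> > 0"
    and Gram: "\<And>x. x \<in> carrier_vec n \<Longrightarrow>
      (transpose_mat B *\<^sub>v x) \<bullet> (transpose_mat B *\<^sub>v x) \<le> - 2 * \<gamma> * ((transpose_mat N *\<^sub>v x) \<bullet> (V *\<^sub>v x))"
  shows "H2_finite p (transfer C N B)"
    and "H2_norm p (transfer C N B) \<le> sqrt (\<gamma> * (\<Sum>i<p. row C i \<bullet> (V *\<^sub>v row C i)))"
proof -
  note row_energy = transfer_row_energy_integral_le[OF N V B C _ hurwitz \<gamma> Gram]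
  note H2 = H2_norm_eq_row_energies[OF transfer_carrier[OF C B]
      continuous_on_transfer_index[OF C N B hurwitz] row_energy(1)]
  then show "H2_finite p (transfer C N B)" by blast
  have "H2_norm p (transfer C N B)
      = sqrt (1 / (2 * pi) * (\<Sum>i<p. integral UNIV (\<lambda>\<mu>. \<Sum>k<q. (cmod (transfer C N B (Complex 0 \<mu>) $$ (i, k)))\<^sup>2)))"
    by (rule H2(2))
  also have "\<dots> \<le> sqrt (1 / (2 * pi) * (\<Sum>i<p. 2 * pi * \<gamma> * (row C i \<bullet> (V *\<^sub>v row C i))))"
  proof (intro real_sqrt_le_mono mult_left_mono sum_mono)
    show "integral UNIV (\<lambda>\<mu>. \<Sum>k<q. (cmod (transfer C N B (Complex 0 \<mu>) $$ (i, k)))\<^sup>2)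
        \<le> 2 * pi * \<gamma> * (row C i \<bullet> (V *\<^sub>v row C i))" if "i \<in> {..<p}" for i
      using row_energy(2) that by simp
  qed simp
  also have "1 / (2 * pi) * (\<Sum>i<p. 2 * pi * \<gamma> * (row C i \<bullet> (V *\<^sub>v row C i)))
      = \<gamma> * (\<Sum>i<p. row C i \<bullet> (V *\<^sub>v row C i))"
    by (simp add: sum_distrib_left mult.assoc)
  finally show "H2_norm p (transfer C N B) \<le> sqrt (\<gamma> * (\<Sum>i<p. row C i \<bullet> (V *\<^sub>v row C i)))" .
qed

section \<open>The observer error dynamics\<close>

lemma augmented_matrices_carrier:
  fixes A S C :: "real mat"
  assumes "r \<ge> 1" and A: "A \<in> carrier_mat n n" and S: "S \<in> carrier_mat n ng" and C: "C \<in> carrier_mat m n"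
  defines "nz \<equiv> n + r * ng" and "dn \<equiv> (r - 1) * ng"
  defines "Aa \<equiv> vcat (hcat A (hcat S (0\<^sub>m n dn)))
                 (vcat (hcat (0\<^sub>m dn n) (hcat (0\<^sub>m dn ng) (1\<^sub>m dn)))
                       (hcat (0\<^sub>m ng n) (hcat (0\<^sub>m ng ng) (0\<^sub>m ng dn))))"
    and "Ca \<equiv> hcat C (0\<^sub>m m (r * ng))"
    and "Cba \<equiv> vcat (hcat (1\<^sub>m n :: real mat) (hcat (0\<^sub>m n ng) (0\<^sub>m n dn)))
                  (hcat (0\<^sub>m ng n) (hcat (1\<^sub>m ng) (0\<^sub>m ng dn)))"
  shows "Aa \<in> carrier_mat nz nz" and "Ca \<in> carrier_mat m nz" and "Cba \<in> carrier_mat (n + ng) nz"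
proof -
  have "Aa \<in> carrier_mat (n + (dn + ng)) (n + (ng + dn))" and "Cba \<in> carrier_mat (n + ng) (n + (ng + dn))"
    unfolding Aa_def Cba_def using A S by (intro vcat_carrier hcat_carrier; simp)+
  \<comment> \<open>\<open>r - 1\<close> is truncated subtraction, hence the hypothesis \<open>r \<ge> 1\<close>\<close>
  moreover have "n + (ng + dn) = nz" "n + (dn + ng) = nz"
    using \<open>r \<ge> 1\<close> unfolding nz_def dn_def by (cases r; simp)+
  ultimately show "Aa \<in> carrier_mat nz nz" and "Cba \<in> carrier_mat (n + ng) nz"
    by simp_all
  show "Ca \<in> carrier_mat m nz"
    unfolding Ca_def nz_def using C by auto
qed

lemma observer_LMI_error_dynamics:
  fixes P Aa Ca R Q :: "real mat"
  assumes P_pd: "pos_def P nz" and Aa: "Aa \<in> carrier_mat nz nz" and Ca: "Ca \<in> carrier_mat m nz"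
    and R: "R \<in> carrier_mat nz m" and Q: "Q \<in> carrier_mat nz m" and \<gamma>: "\<gamma> > 0"
  defines "X \<equiv> transpose_mat Aa * P + transpose_mat Aa * transpose_mat Ca * transpose_mat R
               - transpose_mat Ca * transpose_mat Q + P * Aa + R * Ca * Aa - Q * Ca"
  assumes LMI: "neg_def (vcat (hcat X (hcat Q (- R)))
                   (vcat (hcat (transpose_mat Q) (hcat (- \<gamma> \<cdot>\<^sub>m 1\<^sub>m m) (0\<^sub>m m m)))
                         (hcat (transpose_mat (- R)) (hcat (0\<^sub>m m m) (- \<gamma> \<cdot>\<^sub>m 1\<^sub>m m)))))
                   (nz + 2 * m)"
  defines "N \<equiv> (1\<^sub>m nz + minv P * R * Ca) * Aa - minv P * Q * Ca"
  shows "N \<in> carrier_mat nz nz" and "hurwitz (cmat N)"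
    and "\<And>x. x \<in> carrier_vec nz \<Longrightarrow>
      (transpose_mat (hcat (minv P * Q) (- (minv P * R))) *\<^sub>v x) \<bullet> (transpose_mat (hcat (minv P * Q) (- (minv P * R))) *\<^sub>v x)
        \<le> - 2 * \<gamma> * ((transpose_mat N *\<^sub>v x) \<bullet> (minv P *\<^sub>v x))"
proof -
  note V = pos_def_inverse[OF P_pd]
  have P: "P \<in> carrier_mat nz nz" "transpose_mat P = P"
    using P_pd by (auto simp: pos_def_def symmetric_mat_def)
  have VR: "minv P * R \<in> carrier_mat nz m" and VQ: "minv P * Q \<in> carrier_mat nz m"
    using V R Q by auto
  show N: "N \<in> carrier_mat nz nz"
    unfolding N_def using VR VQ Aa Ca
    by (intro minus_carrier_mat mult_carrier_mat[of _ nz nz _ nz] add_carrier_mat one_carrier_mat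
        mult_carrier_mat[of _ nz m _ nz])
  have Lyap: "transpose_mat N * P + P * N = X"
    unfolding N_def X_def using P V R Q
    by (intro observer_Lyapunov_matrix[OF P VR VQ Aa Ca]) (auto simp: assoc_mult_mat[of P nz nz _ nz _ m, symmetric])
  have X: "X \<in> carrier_mat nz nz"
    using Lyap N P by auto
  show "hurwitz (cmat N)"
    using pos_def_nonneg[OF P_pd] observer_LMI_bound(2)[OF X Q R \<gamma> _ LMI]
    by (intro hurwitz_if_Lyapunov[OF N P]) (auto simp: Lyap)
  show "(transpose_mat (hcat (minv P * Q) (- (minv P * R))) *\<^sub>v x) \<bullet> (transpose_mat (hcat (minv P * Q) (- (minv P * R))) *\<^sub>v x)
      \<le> - 2 * \<gamma> * ((transpose_mat N *\<^sub>v x) \<bullet> (minv P *\<^sub>v x))" if "x \<in> carrier_vec nz" for x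
    using observer_Gramian_inequality[OF P V(1,4,2) N Q R \<gamma> _ that] observer_LMI_bound(1)[OF X Q R \<gamma> _ LMI]
    by (simp add: Lyap)
qed

theorem proposition3:
  fixes n m ng nw r :: nat
    and A S C D\<^sub>\<omega> P R Q Z :: "real mat" and \<gamma> :: real
  assumes "r \<ge> 1"
    and "A \<in> carrier_mat n n" and "S \<in> carrier_mat n ng" and "C \<in> carrier_mat m n"
    and "D\<^sub>\<omega> \<in> carrier_mat n nw"
  defines "nz \<equiv> n + r * ng" and "dn \<equiv> (r - 1) * ng"
  defines "Aa \<equiv> vcat (hcat A (hcat S (0\<^sub>m n dn)))
                 (vcat (hcat (0\<^sub>m dn n) (hcat (0\<^sub>m dn ng) (1\<^sub>m dn)))
                       (hcat (0\<^sub>m ng n) (hcat (0\<^sub>m ng ng) (0\<^sub>m ng dn))))"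
    and "Da \<equiv> vcat (hcat D\<^sub>\<omega> (0\<^sub>m n ng))
                 (vcat (hcat (0\<^sub>m dn nw) (0\<^sub>m dn ng))
                       (hcat (0\<^sub>m ng nw) (1\<^sub>m ng)))"
    and "Ca \<equiv> hcat C (0\<^sub>m m (r * ng))"
    and "Cba \<equiv> vcat (hcat (1\<^sub>m n) (hcat (0\<^sub>m n ng) (0\<^sub>m n dn)))
                  (hcat (0\<^sub>m ng n) (hcat (1\<^sub>m ng) (0\<^sub>m ng dn)))"
  assumes "P \<in> carrier_mat nz nz" and "pos_def P nz"
    and "R \<in> carrier_mat nz m" and "Q \<in> carrier_mat nz m"
    and "symmetric_mat Z (n + ng)"
    and "\<gamma> > 0"
  defines "X \<equiv> transpose_mat Aa * P + transpose_mat Aa * transpose_mat Ca * transpose_mat R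
               - transpose_mat Ca * transpose_mat Q + P * Aa + R * Ca * Aa - Q * Ca"
  assumes "neg_def (vcat (hcat X (hcat Q (- R)))
                   (vcat (hcat (transpose_mat Q) (hcat (- \<gamma> \<cdot>\<^sub>m 1\<^sub>m m) (0\<^sub>m m m)))
                         (hcat (transpose_mat (- R)) (hcat (0\<^sub>m m m) (- \<gamma> \<cdot>\<^sub>m 1\<^sub>m m)))))
                   (nz + 2 * m)"
    and "pos_def (vcat (hcat P (transpose_mat Cba)) (hcat Cba Z)) (nz + (n + ng))"
    and "mtrace Z < \<gamma>"
  defines "E \<equiv> minv P * R" and "K \<equiv> minv P * Q"
  defines "M \<equiv> 1\<^sub>m nz + E * Ca"
  defines "N \<equiv> M * Aa - K * Ca"
  defines "Bb \<equiv> hcat K (- E)"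
  shows "H2_finite (n + ng) (transfer Cba N Bb)
         \<and> H2_norm (n + ng) (transfer Cba N Bb) < \<gamma>"
proof -
  \<comment> \<open>\<open>D\<^sub>\<omega>\<close> and \<open>Da\<close> only enter the disturbance channel, not the transfer from \<open>\<nu>\<^sub>a\<close>\<close>
  note carriers = augmented_matrices_carrier[OF assms(1-4), folded dn_def, folded nz_def Aa_def Ca_def Cba_def]
  note V = pos_def_inverse[OF \<open>pos_def P nz\<close>]
  note error = observer_LMI_error_dynamics[OF \<open>pos_def P nz\<close> carriers(1,2) assms(14,15,17) assms(19)[unfolded X_def],
      folded E_def K_def, folded M_def, folded N_def Bb_def]
  have "Bb \<in> carrier_mat nz (m + m)"
    unfolding Bb_def K_def E_def using V assms(14,15) by auto
  note H2 = H2_norm_le_Gramian_bound[OF error(1) V(1,4) this carriers(3) error(2) \<open>\<gamma> > 0\<close> error(3)]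
  have "(\<Sum>i<n + ng. row Cba i \<bullet> (minv P *\<^sub>v row Cba i)) < \<gamma>"
    using pos_def_block_trace_bound[OF assms(12) carriers(3) _ V(1,2) assms(20)] assms(16,21)
    by (auto simp: symmetric_mat_def)
  then have "sqrt (\<gamma> * (\<Sum>i<n + ng. row Cba i \<bullet> (minv P *\<^sub>v row Cba i))) < sqrt (\<gamma> * \<gamma>)"
    using \<open>\<gamma> > 0\<close> by (intro real_sqrt_less_mono mult_strict_left_mono)
  then show ?thesis
    using H2 \<open>\<gamma> > 0\<close> by simp
qed

end
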